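(* Let $g\le h$ and let $A$ be a tuple of $h$ self-adjoint complex matrices such that $\mathcal D_A\subseteq SM(\mathbb C)^h$ is bounded and $\mathcal D_A(2)$ is closed under entrywise complex conjugation. Then every Euclidean extreme point of the convex set $\mathcal P_g\mathcal D_A(1)\subseteq\mathbb R^g$ is a free extreme point of the matrix convex set $\mathcal P_g\mathcal D_A$.
   Context: For $A\in SM_d(\mathbb C)^h$, $\mathcal D_A=\bigcup_n\mathcal D_A(n)$, $\mathcal D_A(n)=\{X\in SM_n(\mathbb C)^h: I-\sum_iA_i\otimes X_i\succeq0\}$. For a set $K$ of $h$-tuples and $g\le h$, $\mathcal P_gK$ consists of all $X\in SM_n^g$ with $(X,Y)\in K$ for some $Y\in SM_n^{h-g}$; $\mathcal P_g\mathcal D_A(1)$ is its first level. A point $X\in K(n)$ is a free extreme point of a matrix convex set $K$ if whenever $X=\sum_iV_i^*X^{(i)}V_i$ with $X^{(i)}\in K$, $V_i\neq0$, $\sum_iV_i^*V_i=I$, each $X^{(i)}$ is unitarily equivalent to $X$ or to $X\oplus Z$ for some $Z\in K$. *)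

theory Defs
  imports Complex_Main "Jordan_Normal_Form.Schur_Decomposition"
begin

text \<open>A graded set of tuples
  (such as a matrix convex set or a free spectrahedron) is a function
  K :: nat => complex mat list set, where K n is its level n (tuples of
  n x n matrices).\<close>

definition hermitian_mat :: "nat \<Rightarrow> complex mat \<Rightarrow> bool" where
  "hermitian_mat n X \<longleftrightarrow> X \<in> carrier_mat n n \<and> mat_adjoint X = X"

definition SM_tuples :: "nat \<Rightarrow> nat \<Rightarrow> complex mat list set" where
  "SM_tuples h n = {X. length X = h \<and> (\<forall>i<h. hermitian_mat n (X ! i))}"

definition psd_mat :: "nat \<Rightarrow> complex mat \<Rightarrow> bool" where
  "psd_mat n M \<longleftrightarrow> hermitian_mat n M \<and>
     (\<forall>v \<in> carrier_vec n. 0 \<le> Re (conjugate v \<bullet> (M *\<^sub>v v)))"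

definition mat_sum :: "nat \<Rightarrow> nat \<Rightarrow> nat \<Rightarrow> (nat \<Rightarrow> complex mat) \<Rightarrow> complex mat" where
  "mat_sum r c k f = mat r c (\<lambda>ij. \<Sum>i<k. f i $$ ij)"

definition kron :: "complex mat \<Rightarrow> complex mat \<Rightarrow> complex mat" where
  "kron A B = mat (dim_row A * dim_row B) (dim_col A * dim_col B)
     (\<lambda>(i,j). A $$ (i div dim_row B, j div dim_col B) * B $$ (i mod dim_row B, j mod dim_col B))"

definition spectrahedron :: "nat \<Rightarrow> complex mat list \<Rightarrow> nat \<Rightarrow> complex mat list set" where
  "spectrahedron d A n = {X \<in> SM_tuples (length A) n.
     psd_mat (d * n) (1\<^sub>m (d * n) - mat_sum (d * n) (d * n) (length A) (\<lambda>i. kron (A ! i) (X ! i)))}"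

definition vec_norm2 :: "complex vec \<Rightarrow> real" where
  "vec_norm2 v = (\<Sum>i<dim_vec v. (cmod (v $ i))\<^sup>2)"

definition op_norm_le :: "complex mat \<Rightarrow> real \<Rightarrow> bool" where
  "op_norm_le X C \<longleftrightarrow> (\<forall>v \<in> carrier_vec (dim_col X). vec_norm2 (X *\<^sub>v v) \<le> C\<^sup>2 * vec_norm2 v)"

definition bounded_graded :: "(nat \<Rightarrow> complex mat list set) \<Rightarrow> bool" where
  "bounded_graded K \<longleftrightarrow> (\<exists>C. \<forall>n X. X \<in> K n \<longrightarrow> (\<forall>i<length X. op_norm_le (X ! i) C))"

definition proj_graded :: "nat \<Rightarrow> (nat \<Rightarrow> complex mat list set) \<Rightarrow> nat \<Rightarrow> complex mat list set" where
  "proj_graded g K n = take g ` K n"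

definition tuple_scale :: "real \<Rightarrow> complex mat list \<Rightarrow> complex mat list" where
  "tuple_scale t X = map (\<lambda>M. complex_of_real t \<cdot>\<^sub>m M) X"

definition tuple_add :: "complex mat list \<Rightarrow> complex mat list \<Rightarrow> complex mat list" where
  "tuple_add X Y = map2 (+) X Y"

text \<open>Euclidean extreme point of a set S of tuples of 1 x 1 self-adjoint
  matrices (identified with points of R^g): x is in S and is not in the
  open segment between two distinct points of S.\<close>
definition euclidean_extreme_point :: "complex mat list \<Rightarrow> complex mat list set \<Rightarrow> bool" where
  "euclidean_extreme_point x S \<longleftrightarrow> x \<in> S \<and>
     (\<forall>y\<in>S. \<forall>z\<in>S. \<forall>t::real. 0 < t \<and> t < 1 \<and> y \<noteq> z \<longrightarrow>
        x \<noteq> tuple_add (tuple_scale t y) (tuple_scale (1 - t) z))"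

definition tuple_compress :: "complex mat \<Rightarrow> complex mat list \<Rightarrow> complex mat list" where
  "tuple_compress V X = map (\<lambda>M. mat_adjoint V * M * V) X"

definition tuple_dsum :: "nat \<Rightarrow> nat \<Rightarrow> complex mat list \<Rightarrow> complex mat list \<Rightarrow> complex mat list" where
  "tuple_dsum n m X Z = map2 (\<lambda>A B. four_block_mat A (0\<^sub>m n m) (0\<^sub>m m n) B) X Z"

definition unitary_mat :: "nat \<Rightarrow> complex mat \<Rightarrow> bool" where
  "unitary_mat n U \<longleftrightarrow> U \<in> carrier_mat n n \<and> mat_adjoint U * U = 1\<^sub>m n \<and> U * mat_adjoint U = 1\<^sub>m n"

definition unitarily_equiv :: "nat \<Rightarrow> complex mat list \<Rightarrow> complex mat list \<Rightarrow> bool" where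
  "unitarily_equiv n Y W \<longleftrightarrow> (\<exists>U. unitary_mat n U \<and> Y = tuple_compress U W)"

definition free_extreme_point :: "(nat \<Rightarrow> complex mat list set) \<Rightarrow> nat \<Rightarrow> complex mat list \<Rightarrow> bool" where
  "free_extreme_point K n X \<longleftrightarrow> X \<in> K n \<and>
     (\<forall>(k::nat) (m::nat \<Rightarrow> nat) (V::nat \<Rightarrow> complex mat) (Y::nat \<Rightarrow> complex mat list).
        (\<forall>i<k. V i \<in> carrier_mat (m i) n \<and> V i \<noteq> 0\<^sub>m (m i) n \<and> Y i \<in> K (m i)) \<and>
        mat_sum n n k (\<lambda>i. mat_adjoint (V i) * V i) = 1\<^sub>m n \<and>
        (\<forall>j<length X. X ! j = mat_sum n n k (\<lambda>i. mat_adjoint (V i) * (Y i ! j) * V i))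
        \<longrightarrow> (\<forall>i<k. unitarily_equiv (m i) (Y i) X \<or>
                   (\<exists>p Z. Z \<in> K p \<and> m i = n + p \<and> unitarily_equiv (m i) (Y i) (tuple_dsum n p X Z))))"

end

theory Submission
  imports Defs
begin

text \<open>Let \<open>x = \<Sum>\<^sub>i V\<^sub>i\<^sup>* Y\<^sub>i V\<^sub>i\<close> with \<open>Y\<^sub>i\<close> the projection of \<open>W\<^sub>i \<in> \<D>\<^sub>A\<close>. At level one the
  \<open>V\<^sub>i\<close> are columns, so \<open>x\<close> is a convex combination, with weights \<open>\<parallel>V\<^sub>i\<parallel>\<^sup>2\<close>, of the
  compressions of the \<open>W\<^sub>i\<close> to the unit vectors \<open>u\<^sub>i = V\<^sub>i / \<parallel>V\<^sub>i\<parallel>\<close>; by Euclidean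
  extremality each of them equals \<open>x\<close>.

  Next, \<open>u\<^sub>i\<close> is a common eigenvector of the first \<open>g\<close> coordinates of \<open>W\<^sub>i\<close>. Otherwise
  compress \<open>W\<^sub>i\<close> to the span of \<open>u\<^sub>i\<close> and a unit vector \<open>w \<perp> u\<^sub>i\<close> with
  \<open>Re \<langle>w, W\<^sub>i\<^sub>j u\<^sub>i\<rangle> > 0\<close>. Averaging this point of \<open>\<D>\<^sub>A(2)\<close> with its entrywise conjugate,
  which lies in \<open>\<D>\<^sub>A(2)\<close> by hypothesis, gives a real point \<open>[a, b; b, c]\<close>; its defining
  inequality is the block condition \<open>[L\<^sub>A(a), -\<Lambda>\<^sub>A(b); -\<Lambda>\<^sub>A(b), L\<^sub>A(c)] \<succeq> 0\<close>, which forces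
  \<open>L\<^sub>A(a \<plusminus> t b) \<succeq> 0\<close> for some \<open>t > 0\<close> and so contradicts the extremality of \<open>x = a\<close>.

  Finally a Householder reflection taking \<open>u\<^sub>i\<close> to a multiple of \<open>e\<^sub>0\<close> exhibits the
  projection of \<open>W\<^sub>i\<close> as unitarily equivalent to \<open>x \<oplus> Z\<close>, where \<open>Z\<close> is a compression of
  \<open>W\<^sub>i\<close>.\<close>

section \<open>Hermitian forms on finitely supported vectors\<close>

definition trunc :: "nat \<Rightarrow> (nat \<Rightarrow> complex) \<Rightarrow> nat \<Rightarrow> complex" where
  "trunc n a = (\<lambda>k. if k < n then a k else 0)"

text \<open>A Hermitian form on \<open>\<complex>\<^sup>n\<close>, with vectors represented as functions \<open>nat \<Rightarrow> complex\<close>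
  of which only the first \<open>n\<close> values matter.\<close>

definition sesq_form :: "nat \<Rightarrow> ((nat \<Rightarrow> complex) \<Rightarrow> (nat \<Rightarrow> complex) \<Rightarrow> complex) \<Rightarrow> bool" where
  "sesq_form n F \<longleftrightarrow> (\<forall>a a' g. F (\<lambda>k. a k + a' k) g = F a g + F a' g) \<and>
     (\<forall>c a g. F (\<lambda>k. c * a k) g = cnj c * F a g) \<and>
     (\<forall>a g. F g a = cnj (F a g)) \<and>
     (\<forall>a g. F a g = F (trunc n a) (trunc n g))"

definition psd_form :: "((nat \<Rightarrow> complex) \<Rightarrow> (nat \<Rightarrow> complex) \<Rightarrow> complex) \<Rightarrow> bool" where
  "psd_form F \<longleftrightarrow> (\<forall>a. 0 \<le> Re (F a a))"

context
  fixes n :: nat and F :: "(nat \<Rightarrow> complex) \<Rightarrow> (nat \<Rightarrow> complex) \<Rightarrow> complex"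
  assumes F: "sesq_form n F"
begin

lemma sesq_form_add_left: "F (\<lambda>k. a k + a' k) g = F a g + F a' g"
  using F unfolding sesq_form_def by blast

lemma sesq_form_scale_left: "F (\<lambda>k. c * a k) g = cnj c * F a g"
  using F unfolding sesq_form_def by blast

lemma sesq_form_conj: "F g a = cnj (F a g)"
  using F unfolding sesq_form_def by blast

lemma sesq_form_trunc: "F a g = F (trunc n a) (trunc n g)"
  using F unfolding sesq_form_def by blast

lemma sesq_form_add_right: "F g (\<lambda>k. a k + a' k) = F g a + F g a'"
  by (metis sesq_form_conj sesq_form_add_left complex_cnj_add)

lemma sesq_form_scale_right: "F g (\<lambda>k. c * a k) = c * F g a"
  by (metis sesq_form_conj sesq_form_scale_left complex_cnj_mult complex_cnj_cnj)

lemma sesq_form_zero_left: "F (\<lambda>k. 0) g = 0"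
  using sesq_form_scale_left[of 0 g g] by simp

lemma sesq_form_diag_real: "F a a = complex_of_real (Re (F a a))"
  by (metis sesq_form_conj Reals_cnj_iff complex_is_Real_iff of_real_Re)

lemma sesq_form_expand:
  "F (\<lambda>k. x k + c * e k) (\<lambda>k. x k + c * e k) = F x x + cnj c * F e x + c * F x e + cnj c * c * F e e"
  by (simp add: sesq_form_add_left sesq_form_add_right sesq_form_scale_left sesq_form_scale_right
      algebra_simps)

end

lemma sesq_form_compose:
  assumes F: "sesq_form m F"
    and E_add: "\<And>a a'. E (\<lambda>k. a k + a' k) = (\<lambda>k. E a k + E a' k)"
    and E_scale: "\<And>c a. E (\<lambda>k. c * a k) = (\<lambda>k. c * E a k)"
    and E_trunc: "\<And>a. E (trunc n a) = E a"
  shows "sesq_form n (\<lambda>a g. F (E a) (E g))"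
  unfolding sesq_form_def
  by (simp add: E_add E_scale E_trunc sesq_form_add_left[OF F] sesq_form_scale_left[OF F]
      sesq_form_conj[OF F, symmetric])

lemma psd_form_compose: "psd_form F \<Longrightarrow> psd_form (\<lambda>a g. F (E a) (E g))"
  unfolding psd_form_def by blast

lemma quadratic_nonneg_discriminant:
  fixes A P Q :: real
  assumes nonneg: "\<And>s. 0 \<le> A - 2 * s * P + s\<^sup>2 * Q" and "0 \<le> Q" "0 \<le> P"
  shows "P\<^sup>2 \<le> A * Q"
proof (cases "Q = 0")
  case True
  show ?thesis
  proof (cases "P = 0")
    case False
    have "0 \<le> A - 2 * ((\<bar>A\<bar> + 1) / (2 * P)) * P"
      using nonneg[of "(\<bar>A\<bar> + 1) / (2 * P)"] True by simp
    also have "2 * ((\<bar>A\<bar> + 1) / (2 * P)) * P = \<bar>A\<bar> + 1" using False by simp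
    finally show ?thesis by simp
  qed (use True in simp)
next
  case False
  then have Q: "Q > 0" using assms by simp
  have "0 \<le> A - 2 * (P / Q) * P + (P / Q)\<^sup>2 * Q" by (rule nonneg)
  also have "\<dots> = (A * Q - P\<^sup>2) / Q" using Q by (simp add: field_simps power2_eq_square)
  finally show ?thesis using Q by (simp add: zero_le_divide_iff)
qed

lemma cauchy_schwarz_from_quadratic:
  fixes p :: complex and A Q :: real
  assumes "\<And>s::real. 0 \<le> A - 2 * s * (cmod p)\<^sup>2 + s\<^sup>2 * ((cmod p)\<^sup>2 * Q)" and "0 \<le> Q"
  shows "(cmod p)\<^sup>2 \<le> A * Q"
proof (cases "p = 0")
  case True
  then show ?thesis using assms(1)[of 0] assms(2) by simp
next
  case False
  have "((cmod p)\<^sup>2)\<^sup>2 \<le> A * ((cmod p)\<^sup>2 * Q)"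
    by (rule quadratic_nonneg_discriminant) (use assms in auto)
  then have "(cmod p)\<^sup>2 * (cmod p)\<^sup>2 \<le> (cmod p)\<^sup>2 * (A * Q)"
    by (metis power2_eq_square mult.commute mult.left_commute)
  moreover have "(cmod p)\<^sup>2 > 0" using False by simp
  ultimately show ?thesis by (meson mult_le_cancel_left_pos)
qed

lemma cnj_mult_self: "cnj z * z = complex_of_real ((cmod z)\<^sup>2)"
  using complex_norm_square[of z] by (simp add: mult.commute)

lemma sesq_form_cauchy_schwarz:
  assumes F: "sesq_form n F" and P: "psd_form F"
  shows "(cmod (F x y))\<^sup>2 \<le> Re (F x x) * Re (F y y)"
proof -
  let ?p = "F x y"
  define r where "r = (cmod ?p)\<^sup>2"
  have pr: "cnj ?p * ?p = of_real r" unfolding r_def by (rule cnj_mult_self)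
  have "0 \<le> Re (F x x) - 2 * s * r + s\<^sup>2 * (r * Re (F y y))" for s :: real
  proof -
    let ?c = "- (complex_of_real s * cnj ?p)"
    have "0 \<le> Re (F (\<lambda>k. x k + ?c * y k) (\<lambda>k. x k + ?c * y k))"
      using P unfolding psd_form_def by blast
    also have "F (\<lambda>k. x k + ?c * y k) (\<lambda>k. x k + ?c * y k) =
        F x x - 2 * (of_real s * (cnj ?p * ?p)) + of_real s * of_real s * (cnj ?p * ?p) * F y y"
      unfolding sesq_form_expand[OF F] sesq_form_conj[OF F, of y x] by (simp add: algebra_simps)
    finally show ?thesis unfolding pr by (simp add: power2_eq_square algebra_simps)
  qed
  moreover have "0 \<le> Re (F y y)" using P unfolding psd_form_def by blast
  ultimately show ?thesis unfolding r_def by (rule cauchy_schwarz_from_quadratic)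
qed

text \<open>The Cauchy--Schwarz inequality for a positive semidefinite \<open>2 \<times> 2\<close> block form
  \<open>[L, -B; -B\<^sup>*, C]\<close>.\<close>

lemma block_form_cauchy_schwarz:
  assumes L: "sesq_form n L" and B: "sesq_form n B" and C: "sesq_form n C"
    and block: "\<And>a g. 0 \<le> Re (L a a) + Re (C g g) - 2 * Re (B a g)"
  shows "(cmod (B a g))\<^sup>2 \<le> Re (L a a) * Re (C g g)"
proof -
  let ?p = "B a g"
  define r where "r = (cmod ?p)\<^sup>2"
  have pr: "cnj ?p * ?p = of_real r" unfolding r_def by (rule cnj_mult_self)
  have "0 \<le> Re (L a a) - 2 * s * r + s\<^sup>2 * (r * Re (C g g))" for s :: real
  proof -
    let ?c = "complex_of_real s * cnj ?p"
    have "0 \<le> Re (L a a) + Re (C (\<lambda>k. ?c * g k) (\<lambda>k. ?c * g k)) - 2 * Re (B a (\<lambda>k. ?c * g k))"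
      by (rule block)
    also have "C (\<lambda>k. ?c * g k) (\<lambda>k. ?c * g k) = of_real s * of_real s * (cnj ?p * ?p) * C g g"
      unfolding sesq_form_scale_left[OF C] sesq_form_scale_right[OF C] by (simp add: algebra_simps)
    also have "B a (\<lambda>k. ?c * g k) = of_real s * (cnj ?p * ?p)"
      unfolding sesq_form_scale_right[OF B] by (simp add: algebra_simps)
    finally show ?thesis unfolding pr by (simp add: power2_eq_square algebra_simps)
  qed
  moreover have "0 \<le> Re (C g g)"
    using block[of "\<lambda>k. 0" g] sesq_form_zero_left[OF L] sesq_form_zero_left[OF B] by simp
  ultimately show ?thesis unfolding r_def by (rule cauchy_schwarz_from_quadratic)
qed

subsection \<open>A positive form dominates every form it controls\<close>

definition basis_fun :: "nat \<Rightarrow> nat \<Rightarrow> complex" where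
  "basis_fun n = (\<lambda>k. if k = n then 1 else 0)"

text \<open>One Gram--Schmidt step: \<open>trunc n a\<close> corrected along \<open>e\<^sub>n\<close> so as to become
  \<open>L\<close>-orthogonal to \<open>e\<^sub>n\<close> (when \<open>L(e\<^sub>n,e\<^sub>n) = 0\<close> the division yields \<open>0\<close>, and
  orthogonality holds by Cauchy--Schwarz).\<close>

definition orth_last :: "((nat \<Rightarrow> complex) \<Rightarrow> (nat \<Rightarrow> complex) \<Rightarrow> complex) \<Rightarrow> nat \<Rightarrow>
    (nat \<Rightarrow> complex) \<Rightarrow> nat \<Rightarrow> complex" where
  "orth_last L n a = (\<lambda>k. trunc n a k +
     - (L (basis_fun n) (trunc n a) / of_real (Re (L (basis_fun n) (basis_fun n)))) * basis_fun n k)"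

lemma trunc_trunc [simp]: "trunc n (trunc n a) = trunc n a"
  unfolding trunc_def by auto

lemma trunc_add: "trunc n (\<lambda>k. a k + a' k) = (\<lambda>k. trunc n a k + trunc n a' k)"
  unfolding trunc_def by auto

lemma trunc_scale: "trunc n (\<lambda>k. c * a k) = (\<lambda>k. c * trunc n a k)"
  unfolding trunc_def by auto

context
  fixes n :: nat and L :: "(nat \<Rightarrow> complex) \<Rightarrow> (nat \<Rightarrow> complex) \<Rightarrow> complex"
  assumes L: "sesq_form (Suc n) L"
begin

lemma orth_last_add: "orth_last L n (\<lambda>k. a k + a' k) = (\<lambda>k. orth_last L n a k + orth_last L n a' k)"
  unfolding orth_last_def trunc_add sesq_form_add_right[OF L]
  by (auto simp: algebra_simps add_divide_distrib)

lemma orth_last_scale: "orth_last L n (\<lambda>k. c * a k) = (\<lambda>k. c * orth_last L n a k)"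
  unfolding orth_last_def trunc_scale sesq_form_scale_right[OF L] by (auto simp: algebra_simps)

lemma orth_last_trunc: "orth_last L n (trunc n a) = orth_last L n a"
  unfolding orth_last_def by simp

lemma orth_last_decomp:
  "trunc (Suc n) a = (\<lambda>k. orth_last L n a k + (a n +
     L (basis_fun n) (trunc n a) / of_real (Re (L (basis_fun n) (basis_fun n)))) * basis_fun n k)"
  unfolding orth_last_def basis_fun_def trunc_def by (rule ext) (simp add: algebra_simps less_Suc_eq)

lemma orth_last_orthogonal:
  assumes "psd_form L"
  shows "L (basis_fun n) (orth_last L n a) = 0"
proof -
  let ?e = "basis_fun n"
  define l where "l = Re (L ?e ?e)"
  show ?thesis
  proof (cases "l = 0")
    case True
    have "(cmod (L ?e y))\<^sup>2 \<le> 0" for y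
      using sesq_form_cauchy_schwarz[OF L assms, of ?e y] True unfolding l_def by simp
    then show ?thesis by simp
  next
    case False
    have "L ?e ?e = of_real l" unfolding l_def by (rule sesq_form_diag_real[OF L])
    moreover have "L ?e (orth_last L n a) = L ?e (trunc n a) + - (L ?e (trunc n a) / of_real l) * L ?e ?e"
      unfolding orth_last_def l_def sesq_form_add_right[OF L] sesq_form_scale_right[OF L] ..
    ultimately show ?thesis using False by simp
  qed
qed

end

lemma two_mult_le_weighted_squares:
  fixes l s Z :: real
  assumes "l > 0"
  shows "2 * s * Z \<le> l * s\<^sup>2 + Z\<^sup>2 / l"
proof -
  have "0 \<le> (l * s - Z)\<^sup>2" by simp
  then have "(2 * s * Z) * l \<le> (l * s\<^sup>2 + Z\<^sup>2 / l) * l"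
    using assms by (simp add: algebra_simps power2_eq_square)
  then show ?thesis using assms by (meson mult_le_cancel_right_pos)
qed

lemma dominance_arith:
  fixes K' P l c q X Y b :: real
  assumes b: "b \<le> K' * P + 2 * q * X + q\<^sup>2 * Y"
    and "0 \<le> K'" "0 \<le> P" "0 \<le> l" "0 \<le> c" "0 \<le> q"
    and X: "X\<^sup>2 \<le> P * c" and Y: "Y\<^sup>2 \<le> l * c" and X0: "l = 0 \<Longrightarrow> X = 0"
  shows "b \<le> (K' + 2 + 2 * (c / l)) * (P + l * q\<^sup>2)"
proof (cases "l = 0")
  case True
  then have "Y = 0" using Y by simp
  then show ?thesis using True X0 assms(2,3) b by (simp add: distrib_right)
next
  case False
  then have l: "l > 0" using assms(4) by simp
  define r where "r = c / l"
  define M where "M = l * q\<^sup>2"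
  have r: "0 \<le> r" and M: "0 \<le> M" unfolding r_def M_def using assms l by auto
  have "2 * q * X \<le> M + r * P"
    using two_mult_le_weighted_squares[OF l, of q X] divide_right_mono[OF X, of l] l
    unfolding r_def M_def by (simp add: mult.commute)
  moreover have "2 * 1 * Y \<le> l * 1\<^sup>2 + r * l"
    using two_mult_le_weighted_squares[OF l, of 1 Y] divide_right_mono[OF Y, of l] l
    unfolding r_def by simp
  then have "q\<^sup>2 * (2 * Y) \<le> q\<^sup>2 * (l + r * l)"
    by (intro mult_left_mono) auto
  then have "2 * (q\<^sup>2 * Y) \<le> M + r * M"
    unfolding M_def by (simp add: algebra_simps)
  moreover have "0 \<le> K' * M" "0 \<le> r * P" "0 \<le> r * M" using assms r M by auto
  moreover have "(K' + 2 + 2 * r) * (P + M) =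
      K' * P + K' * M + 2 * P + 2 * M + 2 * (r * P) + 2 * (r * M)"
    by (simp add: algebra_simps)
  ultimately show ?thesis using b assms(3) M unfolding r_def[symmetric] M_def[symmetric] by linarith
qed

lemma norm_add4_le: "norm (u + v + w + z) \<le> norm u + norm v + norm w + norm z"
  using norm_triangle_ineq[of "u + v + w" z] norm_triangle_ineq[of "u + v" w] norm_triangle_ineq[of u v]
  by linarith

text \<open>Induction step: split off the last coordinate \<open>L\<close>-orthogonally and bound the
  cross terms by Cauchy--Schwarz and \<open>2 q X \<le> l q\<^sup>2 + X\<^sup>2 / l\<close>.\<close>

lemma sesq_form_dominated_step:
  assumes L: "sesq_form (Suc n) L" and B: "sesq_form (Suc n) B" and PL: "psd_form L" and PC: "psd_form C"
    and CS: "\<forall>a g. (cmod (B a g))\<^sup>2 \<le> Re (L a a) * Re (C g g)"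
    and "0 \<le> K'"
    and K': "\<And>a. cmod (B (orth_last L n a) (orth_last L n a)) \<le> K' * Re (L (orth_last L n a) (orth_last L n a))"
  defines "l \<equiv> Re (L (basis_fun n) (basis_fun n))" and "c \<equiv> Re (C (basis_fun n) (basis_fun n))"
  shows "cmod (B a a) \<le> (K' + 2 + 2 * (c / l)) * Re (L a a)"
proof -
  let ?e = "basis_fun n" and ?E = "orth_last L n"
  have nonneg: "0 \<le> Re (L x x)" "0 \<le> Re (C x x)" for x
    using PL PC unfolding psd_form_def by auto
  define v where "v = a n + L ?e (trunc n a) / of_real l"
  have decomp: "trunc (Suc n) a = (\<lambda>k. ?E a k + v * ?e k)"
    unfolding v_def l_def by (rule orth_last_decomp[OF L])
  have expand: "F a a = F (?E a) (?E a) + cnj v * F ?e (?E a) + v * F (?E a) ?e + cnj v * v * F ?e ?e"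
    if F: "sesq_form (Suc n) F" for F
    unfolding sesq_form_trunc[OF F, of a a] decomp by (rule sesq_form_expand[OF F])
  have "L ?e (?E a) = 0" by (rule orth_last_orthogonal[OF L PL])
  moreover have "L (?E a) ?e = cnj (L ?e (?E a))" by (rule sesq_form_conj[OF L])
  moreover have "L ?e ?e = of_real l" unfolding l_def by (rule sesq_form_diag_real[OF L])
  moreover have "cnj v * v = of_real ((cmod v)\<^sup>2)" by (rule cnj_mult_self)
  ultimately have La: "Re (L a a) = Re (L (?E a) (?E a)) + l * (cmod v)\<^sup>2"
    unfolding expand[OF L] by simp
  have "cmod (B a a) \<le> cmod (B (?E a) (?E a)) + cmod (cnj v * cnj (B (?E a) ?e)) +
      cmod (v * B (?E a) ?e) + cmod (cnj v * v * B ?e ?e)"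
    unfolding expand[OF B] sesq_form_conj[OF B, of ?e "?E a"] by (rule norm_add4_le)
  also have "\<dots> = cmod (B (?E a) (?E a)) + 2 * cmod v * cmod (B (?E a) ?e) + (cmod v)\<^sup>2 * cmod (B ?e ?e)"
    by (simp add: norm_mult power2_eq_square)
  also have "\<dots> \<le> K' * Re (L (?E a) (?E a)) + 2 * cmod v * cmod (B (?E a) ?e) + (cmod v)\<^sup>2 * cmod (B ?e ?e)"
    using K'[of a] by simp
  finally show ?thesis
    unfolding La
  proof (rule dominance_arith)
    show "0 \<le> K'" by fact
    show "0 \<le> Re (L (?E a) (?E a))" by (rule nonneg)
    show "0 \<le> l" "0 \<le> c" unfolding l_def c_def by (rule nonneg)+
    show "0 \<le> cmod v" by simp
    show "(cmod (B (?E a) ?e))\<^sup>2 \<le> Re (L (?E a) (?E a)) * c" "(cmod (B ?e ?e))\<^sup>2 \<le> l * c"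
      using CS unfolding l_def c_def by blast+
    show "l = 0 \<Longrightarrow> cmod (B (?E a) ?e) = 0"
      using CS[rule_format, of ?e "?E a"] sesq_form_conj[OF B, of ?e "?E a"] unfolding l_def by simp
  qed
qed

lemma sesq_form_dominated:
  assumes "sesq_form n L" "sesq_form n B" "sesq_form n C" "psd_form L" "psd_form C"
    and "\<forall>a g. (cmod (B a g))\<^sup>2 \<le> Re (L a a) * Re (C g g)"
  shows "\<exists>K\<ge>0. \<forall>a. cmod (B a a) \<le> K * Re (L a a)"
  using assms
proof (induction n arbitrary: L B C)
  case 0
  have "B a a = 0" for a
    using sesq_form_trunc[OF "0.prems"(2), of a a] sesq_form_zero_left[OF "0.prems"(2)]
    by (simp add: trunc_def)
  then show ?case by auto
next
  case (Suc n)
  note L = Suc.prems(1) and PL = Suc.prems(4) and PC = Suc.prems(5)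
  let ?E = "orth_last L n"
  have restrict: "sesq_form n (\<lambda>a g. F (?E a) (?E g))" if "sesq_form (Suc n) F" for F
    using sesq_form_compose[where E = ?E, OF that orth_last_add[OF L] orth_last_scale[OF L]
        orth_last_trunc[OF L]] .
  obtain K' where "K' \<ge> 0" and K': "\<And>a. cmod (B (?E a) (?E a)) \<le> K' * Re (L (?E a) (?E a))"
    using Suc.IH[OF restrict[OF L] restrict[OF Suc.prems(2)] restrict[OF Suc.prems(3)]
        psd_form_compose[OF PL] psd_form_compose[OF PC]] Suc.prems(6) by blast
  define l where "l = Re (L (basis_fun n) (basis_fun n))"
  define c where "c = Re (C (basis_fun n) (basis_fun n))"
  have "0 \<le> l" "0 \<le> c" using PL PC unfolding psd_form_def l_def c_def by auto
  show ?case
  proof (intro exI conjI allI)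
    show "0 \<le> K' + 2 + 2 * (c / l)" using \<open>K' \<ge> 0\<close> \<open>0 \<le> l\<close> \<open>0 \<le> c\<close> by simp
    show "cmod (B a a) \<le> (K' + 2 + 2 * (c / l)) * Re (L a a)" for a
      unfolding l_def c_def by (rule sesq_form_dominated_step[OF L Suc.prems(2) PL PC Suc.prems(6) \<open>K' \<ge> 0\<close> K'])
  qed
qed

lemma block_form_perturbation:
  assumes L: "sesq_form n L" and B: "sesq_form n B" and C: "sesq_form n C"
    and block: "\<And>a g. 0 \<le> Re (L a a) + Re (C g g) - 2 * Re (B a g)"
  shows "\<exists>t>0. \<forall>a. 0 \<le> Re (L a a) - t * Re (B a a) \<and> 0 \<le> Re (L a a) + t * Re (B a a)"
proof -
  have PL: "psd_form L"
    using block[of _ "\<lambda>k. 0"] sesq_form_zero_left[OF C] sesq_form_conj[OF B, of "\<lambda>k. 0"]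
      sesq_form_zero_left[OF B] by (simp add: psd_form_def)
  have PC: "psd_form C"
    using block[of "\<lambda>k. 0"] sesq_form_zero_left[OF L] sesq_form_zero_left[OF B]
    by (simp add: psd_form_def)
  obtain K where "K \<ge> 0" and K: "\<And>a. cmod (B a a) \<le> K * Re (L a a)"
    using sesq_form_dominated[OF L B C PL PC] block_form_cauchy_schwarz[OF L B C block] by blast
  define t where "t = 1 / (K + 1)"
  have "t > 0" unfolding t_def using \<open>K \<ge> 0\<close> by simp
  moreover have "0 \<le> Re (L a a) - t * Re (B a a) \<and> 0 \<le> Re (L a a) + t * Re (B a a)" for a
  proof -
    have "\<bar>t * Re (B a a)\<bar> \<le> t * (K * Re (L a a))"
      using \<open>t > 0\<close> abs_Re_le_cmod[of "B a a"] K[of a] by (simp add: abs_mult)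
    also have "\<dots> \<le> Re (L a a)"
      using \<open>K \<ge> 0\<close> PL mult_right_mono[of "K / (K + 1)" 1 "Re (L a a)"]
      unfolding t_def psd_form_def by (simp add: field_simps)
    finally show ?thesis by (simp add: abs_le_iff)
  qed
  ultimately show ?thesis by blast
qed

section \<open>Matrix forms and compressions\<close>

lemma mat_adjoint_dim [simp]: "dim_row (mat_adjoint A) = dim_col A" "dim_col (mat_adjoint A) = dim_row A"
  unfolding mat_adjoint_def by auto

lemma mat_adjoint_index [simp]:
  "i < dim_col A \<Longrightarrow> j < dim_row A \<Longrightarrow> mat_adjoint A $$ (i,j) = cnj (A $$ (j,i))"
  unfolding mat_adjoint_def by (auto simp: mat_of_rows_def)

lemma mat_adjoint_carrier [simp]: "V \<in> carrier_mat m n \<Longrightarrow> mat_adjoint V \<in> carrier_mat n m"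
  by auto

lemma mat_adjoint_one: "mat_adjoint (1\<^sub>m n) = (1\<^sub>m n :: complex mat)"
  by (rule eq_matI) auto

lemma hermitian_mat_carrier: "hermitian_mat n M \<Longrightarrow> M \<in> carrier_mat n n"
  unfolding hermitian_mat_def by simp

lemma hermitian_mat_cnj: "hermitian_mat n M \<Longrightarrow> i < n \<Longrightarrow> j < n \<Longrightarrow> cnj (M $$ (j,i)) = M $$ (i,j)"
  unfolding hermitian_mat_def by (metis mat_adjoint_index carrier_matD(1) carrier_matD(2))

lemma hermitian_matI:
  assumes "M \<in> carrier_mat n n" "\<And>i j. i < n \<Longrightarrow> j < n \<Longrightarrow> cnj (M $$ (j,i)) = M $$ (i,j)"
  shows "hermitian_mat n M"
  unfolding hermitian_mat_def using assms by (auto intro!: eq_matI)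

lemma SM_tuples_carrier: "X \<in> SM_tuples h n \<Longrightarrow> i < h \<Longrightarrow> X ! i \<in> carrier_mat n n"
  unfolding SM_tuples_def hermitian_mat_def by auto

definition mat_form :: "nat \<Rightarrow> complex mat \<Rightarrow> (nat \<Rightarrow> complex) \<Rightarrow> (nat \<Rightarrow> complex) \<Rightarrow> complex" where
  "mat_form n M a g = (\<Sum>k<n. \<Sum>l<n. cnj (a k) * M $$ (k,l) * g l)"

definition mat_apply :: "complex mat \<Rightarrow> nat \<Rightarrow> (nat \<Rightarrow> complex) \<Rightarrow> nat \<Rightarrow> complex" where
  "mat_apply V n a = (\<lambda>k. \<Sum>p<n. V $$ (k,p) * a p)"

lemma mat_form_cong:
  "(\<And>k. k < n \<Longrightarrow> a k = a' k) \<Longrightarrow> (\<And>k. k < n \<Longrightarrow> g k = g' k) \<Longrightarrow> mat_form n M a g = mat_form n M a' g'"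
  unfolding mat_form_def by (intro sum.cong refl) auto

lemma mat_form_row: "mat_form m M a g = (\<Sum>k<m. cnj (a k) * (\<Sum>l<m. M $$ (k,l) * g l))"
  unfolding mat_form_def by (simp add: sum_distrib_left mult.assoc)

lemma mat_form_scale: "mat_form m M (\<lambda>l. c * a l) (\<lambda>l. c * a l) = cnj c * c * mat_form m M a a"
  unfolding mat_form_def by (simp add: sum_distrib_left mult_ac)

lemma mat_form_hermitian_cnj:
  assumes "hermitian_mat m M" shows "cnj (mat_form m M a g) = mat_form m M g a"
proof -
  have "cnj (mat_form m M a g) = (\<Sum>k<m. \<Sum>l<m. a k * cnj (M $$ (k,l)) * cnj (g l))"
    unfolding mat_form_def by (simp add: cnj_sum)
  also have "\<dots> = (\<Sum>k<m. \<Sum>l<m. cnj (g l) * M $$ (l,k) * a k)"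
    using hermitian_mat_cnj[OF assms] by (intro sum.cong refl) (simp add: mult.commute mult.left_commute)
  also have "\<dots> = mat_form m M g a" unfolding mat_form_def by (rule sum.swap)
  finally show ?thesis .
qed

lemma mat_form_hermitian_real:
  assumes "hermitian_mat m M" shows "mat_form m M a a = of_real (Re (mat_form m M a a))"
  using mat_form_hermitian_cnj[OF assms, of a a] by (metis Reals_cnj_iff complex_is_Real_iff of_real_Re)

lemma sum_swap3:
  "(\<Sum>x\<in>A. \<Sum>y\<in>B. \<Sum>z\<in>C. f x y z) = (\<Sum>y\<in>B. \<Sum>z\<in>C. \<Sum>x\<in>A. (f x y z :: 'a::comm_monoid_add))"
proof -
  have "(\<Sum>x\<in>A. \<Sum>y\<in>B. \<Sum>z\<in>C. f x y z) = (\<Sum>y\<in>B. \<Sum>x\<in>A. \<Sum>z\<in>C. f x y z)" by (rule sum.swap)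
  also have "\<dots> = (\<Sum>y\<in>B. \<Sum>z\<in>C. \<Sum>x\<in>A. f x y z)" by (intro sum.cong refl) (rule sum.swap)
  finally show ?thesis .
qed

lemma sum_swap4:
  "(\<Sum>p\<in>A. \<Sum>q\<in>B. \<Sum>k\<in>C. \<Sum>l\<in>D. f p q k l) =
   (\<Sum>k\<in>C. \<Sum>l\<in>D. \<Sum>q\<in>B. \<Sum>p\<in>A. (f p q k l :: 'a::comm_monoid_add))"
proof -
  have "(\<Sum>p\<in>A. \<Sum>q\<in>B. \<Sum>k\<in>C. \<Sum>l\<in>D. f p q k l) = (\<Sum>p\<in>A. \<Sum>k\<in>C. \<Sum>l\<in>D. \<Sum>q\<in>B. f p q k l)"
    by (intro sum.cong refl) (rule sum_swap3)
  also have "\<dots> = (\<Sum>k\<in>C. \<Sum>l\<in>D. \<Sum>p\<in>A. \<Sum>q\<in>B. f p q k l)" by (rule sum_swap3)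
  also have "\<dots> = (\<Sum>k\<in>C. \<Sum>l\<in>D. \<Sum>q\<in>B. \<Sum>p\<in>A. f p q k l)" by (intro sum.cong refl) (rule sum.swap)
  finally show ?thesis .
qed

lemma compress_index:
  assumes "M \<in> carrier_mat m m" "V \<in> carrier_mat m n" "p < n" "q < n"
  shows "(mat_adjoint V * M * V) $$ (p,q) = mat_form m M (\<lambda>k. V $$ (k,p)) (\<lambda>k. V $$ (k,q))"
proof -
  have "(mat_adjoint V * M * V) $$ (p,q) = (\<Sum>l<m. (\<Sum>k<m. cnj (V $$ (k,p)) * M $$ (k,l)) * V $$ (l,q))"
    using assms by (simp add: scalar_prod_def lessThan_atLeast0)
  also have "\<dots> = (\<Sum>l<m. \<Sum>k<m. cnj (V $$ (k,p)) * M $$ (k,l) * V $$ (l,q))"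
    by (simp add: sum_distrib_right)
  also have "\<dots> = (\<Sum>k<m. \<Sum>l<m. cnj (V $$ (k,p)) * M $$ (k,l) * V $$ (l,q))"
    by (rule sum.swap)
  finally show ?thesis unfolding mat_form_def .
qed

lemma mat_form_compress:
  assumes "M \<in> carrier_mat m m" "V \<in> carrier_mat m n"
  shows "mat_form n (mat_adjoint V * M * V) a g = mat_form m M (mat_apply V n a) (mat_apply V n g)"
proof -
  have "mat_form n (mat_adjoint V * M * V) a g =
      (\<Sum>p<n. \<Sum>q<n. cnj (a p) * mat_form m M (\<lambda>k. V $$ (k,p)) (\<lambda>k. V $$ (k,q)) * g q)"
    unfolding mat_form_def[of n] using assms
    by (intro sum.cong refl) (auto simp del: index_mult_mat simp add: compress_index[OF assms])
  also have "\<dots> = (\<Sum>p<n. \<Sum>q<n. \<Sum>k<m. \<Sum>l<m. cnj (V $$ (k,p) * a p) * M $$ (k,l) * (V $$ (l,q) * g q))"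
    unfolding mat_form_def by (simp add: sum_distrib_left sum_distrib_right mult.assoc mult.left_commute)
  also have "\<dots> = (\<Sum>k<m. \<Sum>l<m. \<Sum>q<n. \<Sum>p<n. cnj (V $$ (k,p) * a p) * M $$ (k,l) * (V $$ (l,q) * g q))"
    by (rule sum_swap4)
  also have "\<dots> = mat_form m M (mat_apply V n a) (mat_apply V n g)"
    unfolding mat_form_def mat_apply_def by (simp add: sum_distrib_left sum_distrib_right cnj_sum)
  finally show ?thesis .
qed

lemma hermitian_mat_compress:
  assumes M: "hermitian_mat m M" and V: "V \<in> carrier_mat m n"
  shows "hermitian_mat n (mat_adjoint V * M * V)"
proof (rule hermitian_matI)
  show "mat_adjoint V * M * V \<in> carrier_mat n n" using V hermitian_mat_carrier[OF M] by auto
  fix i j assume "i < n" "j < n"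
  then show "cnj ((mat_adjoint V * M * V) $$ (j,i)) = (mat_adjoint V * M * V) $$ (i,j)"
    using compress_index[OF hermitian_mat_carrier[OF M] V] mat_form_hermitian_cnj[OF M] by simp
qed

definition cinner :: "nat \<Rightarrow> (nat \<Rightarrow> complex) \<Rightarrow> (nat \<Rightarrow> complex) \<Rightarrow> complex" where
  "cinner m a b = (\<Sum>k<m. cnj (a k) * b k)"

lemma cinner_cnj: "cinner m b a = cnj (cinner m a b)"
  unfolding cinner_def by (simp add: cnj_sum mult.commute)

lemma cinner_scale_left: "cinner m (\<lambda>k. c * a k) b = cnj c * cinner m a b"
  unfolding cinner_def by (simp add: sum_distrib_left mult_ac)

lemma cinner_scale_right: "cinner m a (\<lambda>k. c * b k) = c * cinner m a b"
  unfolding cinner_def by (simp add: sum_distrib_left mult_ac)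

lemma cinner_self: "cinner m r r = of_real (\<Sum>k<m. (cmod (r k))\<^sup>2)"
  unfolding cinner_def cnj_mult_self by simp

lemma cinner_normalize:
  assumes "0 < (\<Sum>k<m. (cmod (r k))\<^sup>2)"
  defines "c \<equiv> complex_of_real (1 / sqrt (\<Sum>k<m. (cmod (r k))\<^sup>2))"
  shows "cinner m (\<lambda>k. c * r k) (\<lambda>k. c * r k) = 1"
proof -
  define \<rho> where "\<rho> = (\<Sum>k<m. (cmod (r k))\<^sup>2)"
  have "sqrt \<rho> * sqrt \<rho> = \<rho>" "\<rho> > 0" using assms(1) unfolding \<rho>_def by simp_all
  then have "1 / sqrt \<rho> * (1 / sqrt \<rho> * \<rho>) = 1" by (simp add: field_simps)
  then show ?thesis
    unfolding cinner_scale_left cinner_scale_right cinner_self c_def \<rho>_def[symmetric]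
    by (metis complex_cnj_complex_of_real of_real_1 of_real_mult)
qed

section \<open>The free spectrahedron as a family of scalar inequalities\<close>

lemma spectrahedronD:
  assumes "W \<in> spectrahedron d A m"
  shows "length W = length A" and "j < length A \<Longrightarrow> hermitian_mat m (W ! j)"
    and "j < length A \<Longrightarrow> W ! j \<in> carrier_mat m m"
  using assms unfolding spectrahedron_def SM_tuples_def hermitian_mat_def by auto

definition pencil_mat :: "nat \<Rightarrow> complex mat list \<Rightarrow> nat \<Rightarrow> complex mat list \<Rightarrow> complex mat" where
  "pencil_mat d A n X = 1\<^sub>m (d * n) - mat_sum (d * n) (d * n) (length A) (\<lambda>i. kron (A ! i) (X ! i))"

text \<open>The quadratic form of \<^const>\<open>pencil_mat\<close> at the vector of \<open>\<complex>\<^sup>d \<otimes> \<complex>\<^sup>n\<close> whose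
  entry \<open>a * n + k\<close> is \<open>psi a k\<close>.\<close>

definition pencil_form ::
    "nat \<Rightarrow> complex mat list \<Rightarrow> nat \<Rightarrow> complex mat list \<Rightarrow> (nat \<Rightarrow> nat \<Rightarrow> complex) \<Rightarrow> complex" where
  "pencil_form d A n X psi = (\<Sum>a<d. mat_form n (1\<^sub>m n) (psi a) (psi a)) -
     (\<Sum>j<length A. \<Sum>a<d. \<Sum>b<d. A ! j $$ (a,b) * mat_form n (X ! j) (psi a) (psi b))"

lemma pencil_mat_carrier [simp]: "pencil_mat d A n X \<in> carrier_mat (d * n) (d * n)"
  unfolding pencil_mat_def mat_sum_def by auto

lemma mat_sum_index: "i < r \<Longrightarrow> j < c \<Longrightarrow> mat_sum r c k f $$ (i,j) = (\<Sum>l<k. f l $$ (i,j))"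
  unfolding mat_sum_def by simp

lemma mat_sum_cong: "(\<And>i. i < k \<Longrightarrow> f i = f' i) \<Longrightarrow> mat_sum r c k f = mat_sum r c k f'"
  unfolding mat_sum_def by (intro arg_cong[where f = "mat r c"] ext) (simp add: case_prod_beta)

lemma block_index_less: "a < d \<Longrightarrow> k < n \<Longrightarrow> a * n + k < d * (n::nat)"
proof -
  assume "a < d" "k < n"
  then have "a * n + k < (a + 1) * n" by simp
  also have "\<dots> \<le> d * n" using \<open>a < d\<close> by (intro mult_right_mono) auto
  finally show ?thesis .
qed

lemma block_index_eq_iff: "k < n \<Longrightarrow> l < n \<Longrightarrow> a * n + k = b * n + l \<longleftrightarrow> a = b \<and> k = (l::nat)"
proof
  assume "k < n" "l < n" "a * n + k = b * n + l"
  then have "(a * n + k) div n = (b * n + l) div n" "(a * n + k) mod n = (b * n + l) mod n" by auto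
  then show "a = b \<and> k = l" using \<open>k < n\<close> \<open>l < n\<close> by simp
qed auto

lemma sum_lessThan_mult:
  fixes d n :: nat shows "(\<Sum>p<d * n. f p) = (\<Sum>a<d. \<Sum>k<n. (f (a * n + k) :: 'a::comm_monoid_add))"
proof -
  have "(\<Sum>p<d * n. f p) = (\<Sum>a<d. sum f {a * n..<a * n + n})"
    using sum.nat_group[where g = f and k = n and n = d] by simp
  also have "\<dots> = (\<Sum>a<d. \<Sum>k<n. f (a * n + k))"
  proof (rule sum.cong[OF refl])
    fix a
    have "sum f {0 + a * n..<n + a * n} = (\<Sum>k\<in>{0..<n}. f (k + a * n))"
      by (rule sum.shift_bounds_nat_ivl)
    then show "sum f {a * n..<a * n + n} = (\<Sum>k<n. f (a * n + k))"
      by (simp add: add.commute lessThan_atLeast0)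
  qed
  finally show ?thesis .
qed

lemma pencil_mat_index:
  assumes A: "\<forall>i<length A. A ! i \<in> carrier_mat d d" and X: "\<forall>i<length A. X ! i \<in> carrier_mat n n"
    and p: "p < d * n" and q: "q < d * n"
  shows "pencil_mat d A n X $$ (p,q) = (if p = q then 1 else 0) -
    (\<Sum>i<length A. A ! i $$ (p div n, q div n) * X ! i $$ (p mod n, q mod n))"
proof -
  have "kron (A ! i) (X ! i) $$ (p,q) = A ! i $$ (p div n, q div n) * X ! i $$ (p mod n, q mod n)"
    if "i < length A" for i
  proof -
    have "A ! i \<in> carrier_mat d d" "X ! i \<in> carrier_mat n n" using A X that by auto
    then show ?thesis using p q unfolding kron_def by auto
  qed
  then show ?thesis using p q unfolding pencil_mat_def mat_sum_def by simp
qed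

lemma pencil_mat_block_index:
  assumes A: "\<forall>i<length A. A ! i \<in> carrier_mat d d" and X: "\<forall>i<length A. X ! i \<in> carrier_mat n n"
    and "a < d" "k < n" "b < d" "l < n"
  shows "pencil_mat d A n X $$ (a * n + k, b * n + l) =
    (if a = b \<and> k = l then 1 else 0) - (\<Sum>i<length A. A ! i $$ (a,b) * X ! i $$ (k,l))"
  using pencil_mat_index[OF A X block_index_less block_index_less] block_index_eq_iff[of k n l a b] assms
  by simp

lemma sum_blocks_identity:
  fixes d n :: nat
  shows "(\<Sum>a<d. \<Sum>k<n. \<Sum>b<d. \<Sum>l<n. cnj (psi a k) * (if a = b \<and> k = l then 1 else 0) * psi b l) =
   (\<Sum>a<d. mat_form n (1\<^sub>m n) (psi a) (psi a))"
proof (intro sum.cong refl)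
  fix a assume a: "a \<in> {..<d}"
  have "(\<Sum>k<n. \<Sum>b<d. \<Sum>l<n. cnj (psi a k) * (if a = b \<and> k = l then 1 else 0) * psi b l) =
      (\<Sum>k<n. \<Sum>b<d. (if a = b then cnj (psi a k) * psi a k else 0))"
    by (intro sum.cong refl) (auto simp: if_distrib if_distribR sum.delta cong: if_cong)
  also have "\<dots> = (\<Sum>k<n. cnj (psi a k) * psi a k)" using a by simp
  also have "\<dots> = mat_form n (1\<^sub>m n) (psi a) (psi a)"
    unfolding mat_form_def by (intro sum.cong refl) (auto simp: if_distrib if_distribR sum.delta cong: if_cong)
  finally show "(\<Sum>k<n. \<Sum>b<d. \<Sum>l<n. cnj (psi a k) * (if a = b \<and> k = l then 1 else 0) * psi b l) =
      mat_form n (1\<^sub>m n) (psi a) (psi a)" .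
qed

lemma sum_blocks_kron:
  fixes d n h :: nat
  shows "(\<Sum>a<d. \<Sum>k<n. \<Sum>b<d. \<Sum>l<n. \<Sum>i<h. cnj (psi a k) * (F i a b * M i $$ (k,l)) * psi b l) =
   (\<Sum>i<h. \<Sum>a<d. \<Sum>b<d. F i a b * mat_form n (M i) (psi a) (psi b))"
proof -
  have "(\<Sum>k<n. \<Sum>b<d. \<Sum>l<n. \<Sum>i<h. cnj (psi a k) * (F i a b * M i $$ (k,l)) * psi b l) =
      (\<Sum>b<d. \<Sum>i<h. \<Sum>k<n. \<Sum>l<n. cnj (psi a k) * (F i a b * M i $$ (k,l)) * psi b l)" for a
    by (subst sum.swap) (intro sum.cong refl sum_swap3[symmetric])
  then have "(\<Sum>a<d. \<Sum>k<n. \<Sum>b<d. \<Sum>l<n. \<Sum>i<h. cnj (psi a k) * (F i a b * M i $$ (k,l)) * psi b l) =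
      (\<Sum>i<h. \<Sum>a<d. \<Sum>b<d. \<Sum>k<n. \<Sum>l<n. cnj (psi a k) * (F i a b * M i $$ (k,l)) * psi b l)"
    by (simp add: sum_swap3[where A = "{..<h}", symmetric])
  then show ?thesis unfolding mat_form_def by (simp add: sum_distrib_left algebra_simps)
qed

lemma quadratic_form_sum:
  "M \<in> carrier_mat N N \<Longrightarrow> v \<in> carrier_vec N \<Longrightarrow>
   conjugate v \<bullet> (M *\<^sub>v v) = (\<Sum>p<N. \<Sum>q<N. cnj (v $ p) * M $$ (p,q) * v $ q)"
  by (simp add: scalar_prod_def sum_distrib_left lessThan_atLeast0 mult.assoc)

lemma quadratic_form_pencil_mat:
  assumes A: "\<forall>i<length A. A ! i \<in> carrier_mat d d" and X: "\<forall>i<length A. X ! i \<in> carrier_mat n n"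
    and v: "v \<in> carrier_vec (d * n)"
  shows "conjugate v \<bullet> (pencil_mat d A n X *\<^sub>v v) = pencil_form d A n X (\<lambda>a k. v $ (a * n + k))"
proof -
  let ?psi = "\<lambda>a k. v $ (a * n + k)"
  have "conjugate v \<bullet> (pencil_mat d A n X *\<^sub>v v) =
      (\<Sum>p<d * n. \<Sum>q<d * n. cnj (v $ p) * pencil_mat d A n X $$ (p,q) * v $ q)"
    by (rule quadratic_form_sum[OF pencil_mat_carrier v])
  also have "\<dots> = (\<Sum>a<d. \<Sum>k<n. \<Sum>b<d. \<Sum>l<n.
      cnj (?psi a k) * pencil_mat d A n X $$ (a * n + k, b * n + l) * ?psi b l)"
    by (simp add: sum_lessThan_mult)
  also have "\<dots> = (\<Sum>a<d. \<Sum>k<n. \<Sum>b<d. \<Sum>l<n. cnj (?psi a k) * (if a = b \<and> k = l then 1 else 0) * ?psi b l) -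
      (\<Sum>a<d. \<Sum>k<n. \<Sum>b<d. \<Sum>l<n. \<Sum>i<length A.
         cnj (?psi a k) * (A ! i $$ (a,b) * X ! i $$ (k,l)) * ?psi b l)"
    unfolding sum_subtractf[symmetric]
  proof (intro sum.cong refl)
    fix a k b l assume "a \<in> {..<d}" "k \<in> {..<n}" "b \<in> {..<d}" "l \<in> {..<n}"
    then show "cnj (?psi a k) * pencil_mat d A n X $$ (a * n + k, b * n + l) * ?psi b l =
        cnj (?psi a k) * (if a = b \<and> k = l then 1 else 0) * ?psi b l -
        (\<Sum>i<length A. cnj (?psi a k) * (A ! i $$ (a,b) * X ! i $$ (k,l)) * ?psi b l)"
      by (simp add: pencil_mat_block_index[OF A X] ring_distribs sum_distrib_left sum_distrib_right
          mult.assoc)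
  qed
  finally show ?thesis
    unfolding sum_blocks_identity sum_blocks_kron pencil_form_def .
qed

lemma hermitian_pencil_mat:
  assumes A: "\<forall>i<length A. hermitian_mat d (A ! i)" and X: "X \<in> SM_tuples (length A) n"
  shows "hermitian_mat (d * n) (pencil_mat d A n X)"
proof (rule hermitian_matI[OF pencil_mat_carrier])
  have Ac: "\<forall>i<length A. A ! i \<in> carrier_mat d d" using A hermitian_mat_carrier by blast
  have Xc: "\<forall>i<length A. X ! i \<in> carrier_mat n n" using X SM_tuples_carrier by blast
  have Xh: "\<forall>i<length A. hermitian_mat n (X ! i)" using X unfolding SM_tuples_def by auto
  fix p q assume p: "p < d * n" and q: "q < d * n"
  have n0: "n > 0" using p by (cases n) auto
  have dv: "p div n < d" "q div n < d" using p q by (simp_all add: less_mult_imp_div_less)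
  have md: "p mod n < n" "q mod n < n" using n0 by auto
  show "cnj (pencil_mat d A n X $$ (q,p)) = pencil_mat d A n X $$ (p,q)"
    unfolding pencil_mat_index[OF Ac Xc p q] pencil_mat_index[OF Ac Xc q p]
    using hermitian_mat_cnj[OF A[rule_format] dv(1) dv(2)] hermitian_mat_cnj[OF Xh[rule_format] md(1) md(2)]
    by (simp add: cnj_sum)
qed


lemma spectrahedron_iff_pencil_form:
  assumes A: "\<forall>i<length A. hermitian_mat d (A ! i)" and X: "X \<in> SM_tuples (length A) n"
  shows "X \<in> spectrahedron d A n \<longleftrightarrow> (\<forall>psi. 0 \<le> Re (pencil_form d A n X psi))"
proof -
  have Ac: "\<forall>i<length A. A ! i \<in> carrier_mat d d" using A hermitian_mat_carrier by blast
  have Xc: "\<forall>i<length A. X ! i \<in> carrier_mat n n" using X SM_tuples_carrier by blast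
  have "X \<in> spectrahedron d A n \<longleftrightarrow>
      (\<forall>v\<in>carrier_vec (d * n). 0 \<le> Re (pencil_form d A n X (\<lambda>a k. v $ (a * n + k))))"
    unfolding spectrahedron_def psd_mat_def pencil_mat_def[symmetric]
    using X hermitian_pencil_mat[OF A X] quadratic_form_pencil_mat[OF Ac Xc] by auto
  also have "\<dots> \<longleftrightarrow> (\<forall>psi. 0 \<le> Re (pencil_form d A n X psi))"
  proof safe
    fix psi assume H: "\<forall>v\<in>carrier_vec (d * n). 0 \<le> Re (pencil_form d A n X (\<lambda>a k. v $ (a * n + k)))"
    define v :: "complex vec" where "v = vec (d * n) (\<lambda>p. psi (p div n) (p mod n))"
    have "pencil_form d A n X (\<lambda>a k. v $ (a * n + k)) = pencil_form d A n X psi"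
      unfolding pencil_form_def mat_form_def v_def
      by (intro arg_cong2[where f = "(-)"] sum.cong refl arg_cong2[where f = "(*)"])
        (auto simp: block_index_less)
    moreover have "v \<in> carrier_vec (d * n)" unfolding v_def by simp
    ultimately show "0 \<le> Re (pencil_form d A n X psi)" using H by metis
  qed auto
  finally show ?thesis .
qed

lemma spectrahedron_compress:
  assumes A: "\<forall>i<length A. hermitian_mat d (A ! i)" and W: "W \<in> spectrahedron d A m"
    and V: "V \<in> carrier_mat m n" and iso: "mat_adjoint V * V = 1\<^sub>m n"
  shows "tuple_compress V W \<in> spectrahedron d A n"
proof -
  have WS: "W \<in> SM_tuples (length A) m" using W unfolding spectrahedron_def by auto
  have S: "tuple_compress V W \<in> SM_tuples (length A) n"
    using spectrahedronD[OF W] hermitian_mat_compress[OF _ V]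
    unfolding SM_tuples_def tuple_compress_def by auto
  have one: "mat_adjoint V * 1\<^sub>m m * V = 1\<^sub>m n" using V iso by simp
  have "pencil_form d A n (tuple_compress V W) psi = pencil_form d A m W (\<lambda>a. mat_apply V n (psi a))"
    for psi
    unfolding pencil_form_def tuple_compress_def
    using mat_form_compress[OF one_carrier_mat V, unfolded one]
      mat_form_compress[OF spectrahedronD(3)[OF W] V] spectrahedronD(1)[OF W]
    by simp
  then show ?thesis using spectrahedron_iff_pencil_form[OF A S] spectrahedron_iff_pencil_form[OF A WS] W
    by simp
qed

section \<open>Points of the first level\<close>

definition scalar_tuple :: "(nat \<Rightarrow> real) \<Rightarrow> nat \<Rightarrow> complex mat list" where
  "scalar_tuple f h = map (\<lambda>j. mat 1 1 (\<lambda>_. complex_of_real (f j))) [0..<h]"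

definition entry_form ::
    "nat \<Rightarrow> (nat \<Rightarrow> nat \<Rightarrow> complex) \<Rightarrow> (nat \<Rightarrow> complex) \<Rightarrow> (nat \<Rightarrow> complex) \<Rightarrow> complex" where
  "entry_form d F a g = (\<Sum>x<d. \<Sum>y<d. cnj (a x) * F x y * g y)"

text \<open>The entries of \<open>\<Lambda>\<^sub>A(f) = \<Sum>\<^sub>j f\<^sub>j A\<^sub>j\<close> and of the pencil \<open>L\<^sub>A(f) = I - \<Lambda>\<^sub>A(f)\<close>.\<close>

definition lin_pencil_at :: "complex mat list \<Rightarrow> (nat \<Rightarrow> real) \<Rightarrow> nat \<Rightarrow> nat \<Rightarrow> complex" where
  "lin_pencil_at A f x y = (\<Sum>j<length A. complex_of_real (f j) * A ! j $$ (x,y))"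

definition pencil_at :: "complex mat list \<Rightarrow> (nat \<Rightarrow> real) \<Rightarrow> nat \<Rightarrow> nat \<Rightarrow> complex" where
  "pencil_at A f x y = (if x = y then 1 else 0) - lin_pencil_at A f x y"

lemma scalar_tuple_length [simp]: "length (scalar_tuple f h) = h"
  unfolding scalar_tuple_def by simp

lemma scalar_tuple_nth [simp]: "j < h \<Longrightarrow> scalar_tuple f h ! j = mat 1 1 (\<lambda>_. complex_of_real (f j))"
  unfolding scalar_tuple_def by simp

lemma take_scalar_tuple: "g \<le> h \<Longrightarrow> take g (scalar_tuple f h) = scalar_tuple f g"
  unfolding scalar_tuple_def by (simp add: take_map)

lemma scalar_tuple_eq_iff: "scalar_tuple f h = scalar_tuple f' h \<longleftrightarrow> (\<forall>j<h. f j = f' j)"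
proof
  assume "scalar_tuple f h = scalar_tuple f' h"
  then have "\<forall>j<h. scalar_tuple f h ! j $$ (0,0) = scalar_tuple f' h ! j $$ (0,0)" by simp
  then show "\<forall>j<h. f j = f' j" by simp
qed (auto simp: scalar_tuple_def)

lemma scalar_tuple_SM_tuples: "scalar_tuple f h \<in> SM_tuples h 1"
  unfolding SM_tuples_def hermitian_mat_def by (auto intro!: eq_matI)

lemma SM_tuples_1_scalar_tuple:
  assumes "X \<in> SM_tuples h 1" shows "X = scalar_tuple (\<lambda>j. Re (X ! j $$ (0,0))) h"
proof (rule nth_equalityI)
  show "length X = length (scalar_tuple (\<lambda>j. Re (X ! j $$ (0,0))) h)"
    using assms unfolding SM_tuples_def by simp
  fix j assume "j < length X"
  then have j: "j < h" and H: "hermitian_mat 1 (X ! j)" using assms unfolding SM_tuples_def by auto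
  have "cnj (X ! j $$ (0,0)) = X ! j $$ (0,0)" using hermitian_mat_cnj[OF H, of 0 0] by simp
  then have "X ! j $$ (0,0) = complex_of_real (Re (X ! j $$ (0,0)))"
    by (metis Reals_cnj_iff complex_is_Real_iff of_real_Re)
  then show "X ! j = scalar_tuple (\<lambda>j. Re (X ! j $$ (0,0))) h ! j"
    using hermitian_mat_carrier[OF H] j by (auto intro!: eq_matI)
qed

lemma tuple_comb_scalar_tuple:
  "tuple_add (tuple_scale t (scalar_tuple f g)) (tuple_scale (1 - t) (scalar_tuple f' g)) =
   scalar_tuple (\<lambda>j. t * f j + (1 - t) * f' j) g"
  unfolding tuple_add_def tuple_scale_def scalar_tuple_def
  by (rule nth_equalityI) (auto intro!: eq_matI)

lemma euclidean_extreme_point_scalar_tupleD: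
  assumes "euclidean_extreme_point x S" "scalar_tuple f g \<in> S" "scalar_tuple f' g \<in> S"
    and "0 < t" "t < 1" and "x = scalar_tuple (\<lambda>j. t * f j + (1 - t) * f' j) g"
  shows "\<forall>j<g. f j = f' j"
  using assms tuple_comb_scalar_tuple[of t f g f'] scalar_tuple_eq_iff[of f g f']
  unfolding euclidean_extreme_point_def by metis

lemma entry_form_sesq_form:
  assumes H: "\<And>x y. x < d \<Longrightarrow> y < d \<Longrightarrow> F y x = cnj (F x y)"
  shows "sesq_form d (entry_form d F)"
  unfolding sesq_form_def
proof (intro conjI allI)
  fix a a' g show "entry_form d F (\<lambda>k. a k + a' k) g = entry_form d F a g + entry_form d F a' g"
    unfolding entry_form_def by (simp add: ring_distribs sum.distrib)
next
  fix c a g show "entry_form d F (\<lambda>k. c * a k) g = cnj c * entry_form d F a g"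
    unfolding entry_form_def by (simp add: algebra_simps sum_distrib_left)
next
  fix a g
  have "cnj (entry_form d F a g) = (\<Sum>x<d. \<Sum>y<d. a x * cnj (F x y) * cnj (g y))"
    unfolding entry_form_def by (simp add: cnj_sum)
  also have "\<dots> = (\<Sum>x<d. \<Sum>y<d. cnj (g y) * F y x * a x)"
  proof (intro sum.cong refl)
    fix x y assume "x \<in> {..<d}" "y \<in> {..<d}"
    then have "cnj (F x y) = F y x" using H[of x y] by simp
    then show "a x * cnj (F x y) * cnj (g y) = cnj (g y) * F y x * a x" by (simp add: mult_ac)
  qed
  also have "\<dots> = entry_form d F g a" unfolding entry_form_def by (rule sum.swap)
  finally show "entry_form d F g a = cnj (entry_form d F a g)" by simp
next
  fix a g show "entry_form d F a g = entry_form d F (trunc d a) (trunc d g)"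
    unfolding entry_form_def trunc_def by (intro sum.cong refl) auto
qed

lemma lin_pencil_at_hermitian:
  assumes A: "\<forall>i<length A. hermitian_mat d (A ! i)" and "x < d" "y < d"
  shows "lin_pencil_at A f y x = cnj (lin_pencil_at A f x y)"
  unfolding lin_pencil_at_def using hermitian_mat_cnj[OF A[rule_format] \<open>y < d\<close> \<open>x < d\<close>]
  by (simp add: cnj_sum)

lemma pencil_at_hermitian:
  assumes "\<forall>i<length A. hermitian_mat d (A ! i)" "x < d" "y < d"
  shows "pencil_at A f y x = cnj (pencil_at A f x y)"
  unfolding pencil_at_def using lin_pencil_at_hermitian[OF assms] by simp

lemma entry_form_sum:
  assumes "finite I"
  shows "entry_form d (\<lambda>x y. \<Sum>i\<in>I. c i * F i x y) a g = (\<Sum>i\<in>I. c i * entry_form d (F i) a g)"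
proof -
  have "entry_form d (\<lambda>x y. \<Sum>i\<in>I. c i * F i x y) a g =
      (\<Sum>x<d. \<Sum>y<d. \<Sum>i\<in>I. c i * (cnj (a x) * F i x y * g y))"
    unfolding entry_form_def by (simp add: sum_distrib_left sum_distrib_right mult_ac)
  also have "\<dots> = (\<Sum>i\<in>I. \<Sum>x<d. \<Sum>y<d. c i * (cnj (a x) * F i x y * g y))"
    by (rule sum_swap3[symmetric])
  finally show ?thesis unfolding entry_form_def by (simp add: sum_distrib_left)
qed

lemma entry_form_lin_pencil_at:
  "entry_form d (lin_pencil_at A f) a g =
   (\<Sum>j<length A. complex_of_real (f j) * entry_form d (\<lambda>x y. A ! j $$ (x,y)) a g)"
  unfolding lin_pencil_at_def by (rule entry_form_sum) simp

lemma entry_form_pencil_at: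
  "entry_form d (pencil_at A f) a g = (\<Sum>x<d. cnj (a x) * g x) - entry_form d (lin_pencil_at A f) a g"
proof -
  have "(\<Sum>y<d. cnj (a x) * (if x = y then 1 else 0) * g y) = cnj (a x) * g x" if "x < d" for x
    using that by (simp add: if_distrib if_distribR sum.delta cong: if_cong)
  then show ?thesis
    unfolding pencil_at_def entry_form_def by (simp add: ring_distribs sum_subtractf)
qed

lemma entry_form_diff:
  "entry_form d (\<lambda>x y. F x y - c * G x y) a g = entry_form d F a g - c * entry_form d G a g"
  unfolding entry_form_def by (simp add: algebra_simps sum_subtractf sum_distrib_left)

lemma pencil_at_shift:
  "pencil_at A (\<lambda>j. w j + t * b j) = (\<lambda>x y. pencil_at A w x y - complex_of_real t * lin_pencil_at A b x y)"
  unfolding pencil_at_def lin_pencil_at_def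
  by (intro ext) (simp add: algebra_simps sum.distrib sum_distrib_left)

lemma pencil_at_convex_comb:
  assumes "finite I" "(\<Sum>i\<in>I. s i) = 1"
  shows "pencil_at A (\<lambda>j. \<Sum>i\<in>I. s i * p i j) x y = (\<Sum>i\<in>I. complex_of_real (s i) * pencil_at A (p i) x y)"
proof -
  have "(\<Sum>i\<in>I. complex_of_real (s i) * (if x = y then 1 else 0)) = (if x = y then 1 else 0)"
    using assms(2) by (simp add: sum_distrib_right[symmetric]) (metis of_real_1 of_real_sum)
  moreover have "(\<Sum>i\<in>I. complex_of_real (s i) * lin_pencil_at A (p i) x y) =
      lin_pencil_at A (\<lambda>j. \<Sum>i\<in>I. s i * p i j) x y"
    unfolding lin_pencil_at_def sum_distrib_left
    by (subst sum.swap) (simp add: of_real_sum sum_distrib_right mult.assoc)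
  ultimately show ?thesis
    unfolding pencil_at_def by (simp add: right_diff_distrib sum_subtractf)
qed

lemma pencil_form_scalar_tuple:
  "pencil_form d A 1 (scalar_tuple f (length A)) psi =
   entry_form d (pencil_at A f) (\<lambda>x. psi x 0) (\<lambda>x. psi x 0)"
  unfolding pencil_form_def entry_form_pencil_at entry_form_lin_pencil_at
  by (simp add: mat_form_def entry_form_def sum_distrib_left mult_ac)

lemma scalar_tuple_in_spectrahedron_iff:
  assumes A: "\<forall>i<length A. hermitian_mat d (A ! i)"
  shows "scalar_tuple f (length A) \<in> spectrahedron d A 1 \<longleftrightarrow>
    (\<forall>u. 0 \<le> Re (entry_form d (pencil_at A f) u u))"
  unfolding spectrahedron_iff_pencil_form[OF A scalar_tuple_SM_tuples] pencil_form_scalar_tuple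
proof (intro iffI allI)
  fix u :: "nat \<Rightarrow> complex"
  assume "\<forall>psi. 0 \<le> Re (entry_form d (pencil_at A f) (\<lambda>x. psi x 0) (\<lambda>x. psi x 0))"
  then show "0 \<le> Re (entry_form d (pencil_at A f) u u)" by (rule allE[of _ "\<lambda>x k. u x"]) simp
qed simp

lemma spectrahedron_level1_convex:
  assumes A: "\<forall>i<length A. hermitian_mat d (A ! i)" and "finite I"
    and "\<And>i. i \<in> I \<Longrightarrow> s i \<ge> 0" and "(\<Sum>i\<in>I. s i) = 1"
    and P: "\<And>i. i \<in> I \<Longrightarrow> scalar_tuple (p i) (length A) \<in> spectrahedron d A 1"
  shows "scalar_tuple (\<lambda>j. \<Sum>i\<in>I. s i * p i j) (length A) \<in> spectrahedron d A 1"
  unfolding scalar_tuple_in_spectrahedron_iff[OF A]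
proof
  fix u
  have "Re (entry_form d (pencil_at A (\<lambda>j. \<Sum>i\<in>I. s i * p i j)) u u) =
      (\<Sum>i\<in>I. s i * Re (entry_form d (pencil_at A (p i)) u u))"
    unfolding pencil_at_convex_comb[OF assms(2,4)] entry_form_sum[OF assms(2)] by (simp add: Re_sum)
  also have "\<dots> \<ge> 0"
    using assms(3) P scalar_tuple_in_spectrahedron_iff[OF A] by (intro sum_nonneg mult_nonneg_nonneg) auto
  finally show "0 \<le> Re (entry_form d (pencil_at A (\<lambda>j. \<Sum>i\<in>I. s i * p i j)) u u)" .
qed

lemma spectrahedron_unit_compress:
  assumes A: "\<forall>i<length A. hermitian_mat d (A ! i)" and W: "W \<in> spectrahedron d A m"
    and u: "cinner m u u = 1"
  shows "scalar_tuple (\<lambda>j. Re (mat_form m (W ! j) u u)) (length A) \<in> spectrahedron d A 1"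
proof -
  define V where "V = mat m 1 (\<lambda>(k,c). u k)"
  have V: "V \<in> carrier_mat m 1" unfolding V_def by simp
  have "mat_adjoint V * V = 1\<^sub>m 1"
    by (rule eq_matI) (use u in \<open>auto simp: V_def cinner_def scalar_prod_def lessThan_atLeast0 mult.commute\<close>)
  then have in1: "tuple_compress V W \<in> spectrahedron d A 1" by (rule spectrahedron_compress[OF A W V])
  then have "tuple_compress V W \<in> SM_tuples (length A) 1" unfolding spectrahedron_def by auto
  then have "tuple_compress V W = scalar_tuple (\<lambda>j. Re (tuple_compress V W ! j $$ (0,0))) (length A)"
    by (rule SM_tuples_1_scalar_tuple)
  also have "\<dots> = scalar_tuple (\<lambda>j. Re (mat_form m (W ! j) u u)) (length A)"
  proof (unfold scalar_tuple_eq_iff, intro allI impI)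
    fix j assume j: "j < length A"
    have "tuple_compress V W ! j $$ (0,0) = mat_form m (W ! j) (\<lambda>k. V $$ (k,0)) (\<lambda>k. V $$ (k,0))"
      using j spectrahedronD[OF W] compress_index[OF spectrahedronD(3)[OF W j] V]
      by (simp add: tuple_compress_def)
    also have "\<dots> = mat_form m (W ! j) u u" by (rule mat_form_cong) (auto simp: V_def)
    finally show "Re (tuple_compress V W ! j $$ (0,0)) = Re (mat_form m (W ! j) u u)" by simp
  qed
  finally show ?thesis using in1 by simp
qed

section \<open>Euclidean extreme points force common eigenvectors\<close>

lemma mat_form_2:
  "mat_form 2 M a g = cnj (a 0) * M $$ (0,0) * g 0 + cnj (a 0) * M $$ (0,1) * g 1 +
     cnj (a 1) * M $$ (1,0) * g 0 + cnj (a 1) * M $$ (1,1) * g 1"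
  unfolding mat_form_def by (simp add: numeral_2_eq_2 lessThan_Suc)

lemma cnj_add_self: "cnj z + z = 2 * complex_of_real (Re z)" "z + cnj z = 2 * complex_of_real (Re z)"
  by (simp_all add: complex_eq_iff)

lemma mat_form_2_conj_sum:
  assumes M: "hermitian_mat 2 M"
  shows "mat_form 2 M (\<lambda>k. if k = 0 then a else b) (\<lambda>k. if k = 0 then a' else b') +
      mat_form 2 (map_mat cnj M) (\<lambda>k. if k = 0 then a else b) (\<lambda>k. if k = 0 then a' else b') =
    2 * (of_real (Re (M $$ (0,0))) * (cnj a * a') + of_real (Re (M $$ (1,1))) * (cnj b * b') +
      of_real (Re (M $$ (1,0))) * (cnj a * b') + of_real (Re (M $$ (1,0))) * (cnj b * a'))"
proof -
  let ?N = "map_mat cnj M"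
  have N: "?N $$ (p,q) = cnj (M $$ (p,q))" if "p < 2" "q < 2" for p q
    using hermitian_mat_carrier[OF M] that by simp
  have "mat_form 2 M (\<lambda>k. if k = 0 then a else b) (\<lambda>k. if k = 0 then a' else b') +
      mat_form 2 ?N (\<lambda>k. if k = 0 then a else b) (\<lambda>k. if k = 0 then a' else b') =
      (M $$ (0,0) + ?N $$ (0,0)) * (cnj a * a') + (M $$ (1,1) + ?N $$ (1,1)) * (cnj b * b') +
      (M $$ (0,1) + ?N $$ (0,1)) * (cnj a * b') + (M $$ (1,0) + ?N $$ (1,0)) * (cnj b * a')"
    unfolding mat_form_2 by (simp add: algebra_simps)
  also have "M $$ (0,1) = cnj (M $$ (1,0))" using hermitian_mat_cnj[OF M, of 0 1] by simp
  also have "cnj (M $$ (1,0)) + ?N $$ (0,1) = 2 * of_real (Re (M $$ (1,0)))"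
    using N[of 0 1] \<open>M $$ (0,1) = cnj (M $$ (1,0))\<close> by (simp add: cnj_add_self)
  also have "M $$ (0,0) + ?N $$ (0,0) = 2 * of_real (Re (M $$ (0,0)))"
    using N[of 0 0] by (simp add: cnj_add_self)
  also have "M $$ (1,1) + ?N $$ (1,1) = 2 * of_real (Re (M $$ (1,1)))"
    using N[of 1 1] by (simp add: cnj_add_self)
  also have "M $$ (1,0) + ?N $$ (1,0) = 2 * of_real (Re (M $$ (1,0)))"
    using N[of 1 0] by (simp add: cnj_add_self)
  finally show ?thesis by (simp add: algebra_simps)
qed

text \<open>Averaging a level-two point \<open>X\<close> with its entrywise conjugate gives the real point
  \<open>[a\<^sub>j, b\<^sub>j; b\<^sub>j, c\<^sub>j]\<close>, whose defining inequality is the \<open>2 \<times> 2\<close> block form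
  \<open>[L\<^sub>A(a), -\<Lambda>\<^sub>A(b); -\<Lambda>\<^sub>A(b), L\<^sub>A(c)] \<succeq> 0\<close>.\<close>

lemma pencil_form_2_conj_sum:
  assumes lX: "length X = length A" and X: "\<forall>j<length A. hermitian_mat 2 (X ! j)"
  defines "aw \<equiv> \<lambda>j. Re (X ! j $$ (0,0))" and "cw \<equiv> \<lambda>j. Re (X ! j $$ (1,1))"
    and "bt \<equiv> \<lambda>j. Re (X ! j $$ (1,0))"
  shows "pencil_form d A 2 X (\<lambda>x k. if k = 0 then al x else ga x) +
      pencil_form d A 2 (map (map_mat cnj) X) (\<lambda>x k. if k = 0 then al x else ga x) =
    2 * (entry_form d (pencil_at A aw) al al + entry_form d (pencil_at A cw) ga ga -
      entry_form d (lin_pencil_at A bt) al ga - entry_form d (lin_pencil_at A bt) ga al)"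
proof -
  let ?psi = "\<lambda>x k. if k = 0 then al x else ga x" and ?Y = "map (map_mat cnj) X"
  let ?Q = "\<lambda>j. entry_form d (\<lambda>x y. A ! j $$ (x,y))"
  have sum2: "mat_form 2 (X ! j) (?psi x) (?psi y) + mat_form 2 (?Y ! j) (?psi x) (?psi y) =
      2 * (of_real (aw j) * (cnj (al x) * al y) + of_real (cw j) * (cnj (ga x) * ga y) +
        of_real (bt j) * (cnj (al x) * ga y) + of_real (bt j) * (cnj (ga x) * al y))"
    if j: "j < length A" for j x y
    using mat_form_2_conj_sum[OF X[rule_format, OF j]] j lX unfolding aw_def cw_def bt_def by simp
  have inner: "(\<Sum>x<d. \<Sum>y<d. A ! j $$ (x,y) *
      (mat_form 2 (X ! j) (?psi x) (?psi y) + mat_form 2 (?Y ! j) (?psi x) (?psi y))) =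
    2 * (of_real (aw j) * ?Q j al al + of_real (cw j) * ?Q j ga ga +
      of_real (bt j) * ?Q j al ga + of_real (bt j) * ?Q j ga al)" if "j < length A" for j
    unfolding sum2[OF that] entry_form_def
    by (simp add: sum.distrib sum_distrib_left ring_distribs mult_ac)
  have "pencil_form d A 2 X ?psi + pencil_form d A 2 ?Y ?psi =
      2 * ((\<Sum>x<d. cnj (al x) * al x) + (\<Sum>x<d. cnj (ga x) * ga x)) -
      ((\<Sum>j<length A. \<Sum>x<d. \<Sum>y<d. A ! j $$ (x,y) * mat_form 2 (X ! j) (?psi x) (?psi y)) +
       (\<Sum>j<length A. \<Sum>x<d. \<Sum>y<d. A ! j $$ (x,y) * mat_form 2 (?Y ! j) (?psi x) (?psi y)))"
    unfolding pencil_form_def length_map lX by (simp add: mat_form_2 sum.distrib)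
  also have "(\<Sum>j<length A. \<Sum>x<d. \<Sum>y<d. A ! j $$ (x,y) * mat_form 2 (X ! j) (?psi x) (?psi y)) +
       (\<Sum>j<length A. \<Sum>x<d. \<Sum>y<d. A ! j $$ (x,y) * mat_form 2 (?Y ! j) (?psi x) (?psi y)) =
      (\<Sum>j<length A. \<Sum>x<d. \<Sum>y<d. A ! j $$ (x,y) *
        (mat_form 2 (X ! j) (?psi x) (?psi y) + mat_form 2 (?Y ! j) (?psi x) (?psi y)))"
    by (simp add: sum.distrib distrib_left)
  also have "\<dots> = (\<Sum>j<length A. 2 * (of_real (aw j) * ?Q j al al + of_real (cw j) * ?Q j ga ga +
      of_real (bt j) * ?Q j al ga + of_real (bt j) * ?Q j ga al))"
    by (rule sum.cong) (simp_all add: inner)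
  finally show ?thesis
    unfolding entry_form_pencil_at entry_form_lin_pencil_at
    by (simp add: sum.distrib sum_distrib_left algebra_simps)
qed

lemma conj_closed_block_form:
  assumes A: "\<forall>i<length A. hermitian_mat d (A ! i)"
    and X: "X \<in> spectrahedron d A 2" and Y: "map (map_mat cnj) X \<in> spectrahedron d A 2"
  defines "aw \<equiv> \<lambda>j. Re (X ! j $$ (0,0))" and "cw \<equiv> \<lambda>j. Re (X ! j $$ (1,1))"
    and "bt \<equiv> \<lambda>j. Re (X ! j $$ (1,0))"
  shows "0 \<le> Re (entry_form d (pencil_at A aw) al al) + Re (entry_form d (pencil_at A cw) ga ga) -
    2 * Re (entry_form d (lin_pencil_at A bt) al ga)"
proof -
  let ?psi = "\<lambda>x k. if k = 0 then al x else ga x"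
  have SM: "Z \<in> SM_tuples (length A) 2" if "Z \<in> spectrahedron d A 2" for Z
    using that unfolding spectrahedron_def by auto
  have "0 \<le> Re (pencil_form d A 2 X ?psi) + Re (pencil_form d A 2 (map (map_mat cnj) X) ?psi)"
    using spectrahedron_iff_pencil_form[OF A SM[OF X]] spectrahedron_iff_pencil_form[OF A SM[OF Y]] X Y
    by (simp add: add_nonneg_nonneg)
  also have "\<dots> = 2 * (Re (entry_form d (pencil_at A aw) al al) + Re (entry_form d (pencil_at A cw) ga ga) -
      Re (entry_form d (lin_pencil_at A bt) al ga) - Re (entry_form d (lin_pencil_at A bt) ga al))"
  proof -
    have "pencil_form d A 2 X ?psi + pencil_form d A 2 (map (map_mat cnj) X) ?psi =
        2 * (entry_form d (pencil_at A aw) al al + entry_form d (pencil_at A cw) ga ga -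
          entry_form d (lin_pencil_at A bt) al ga - entry_form d (lin_pencil_at A bt) ga al)"
      unfolding aw_def cw_def bt_def
      by (rule pencil_form_2_conj_sum) (use spectrahedronD[OF X] in auto)
    from arg_cong[OF this, of Re] show ?thesis by simp
  qed
  also have "Re (entry_form d (lin_pencil_at A bt) ga al) = Re (entry_form d (lin_pencil_at A bt) al ga)"
  proof -
    have "sesq_form d (entry_form d (lin_pencil_at A bt))"
      by (rule entry_form_sesq_form) (rule lin_pencil_at_hermitian[OF A])
    from sesq_form_conj[OF this, of ga al] show ?thesis by simp
  qed
  finally show ?thesis by simp
qed

lemma isometry_two_columns:
  assumes "cinner m u u = 1" "cinner m w w = 1" "cinner m u w = 0"
  defines "V \<equiv> mat m 2 (\<lambda>(k,c). if c = 0 then u k else w k)"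
  shows "mat_adjoint V * V = 1\<^sub>m 2"
proof (rule eq_matI)
  have "cinner m w u = 0" using cinner_cnj[of m u w] assms(3) by simp
  fix i j assume "i < dim_row (1\<^sub>m 2 :: complex mat)" "j < dim_col (1\<^sub>m 2 :: complex mat)"
  then have i: "i = 0 \<or> i = 1" and j: "j = 0 \<or> j = 1" by auto
  have "(mat_adjoint V * V) $$ (i,j) = cinner m (\<lambda>k. V $$ (k,i)) (\<lambda>k. V $$ (k,j))"
    using i j unfolding V_def cinner_def by (auto simp: scalar_prod_def lessThan_atLeast0)
  also have "\<dots> = cinner m (if i = 0 then u else w) (if j = 0 then u else w)"
    using i j unfolding V_def cinner_def by (intro sum.cong) auto
  also have "\<dots> = (1\<^sub>m 2 :: complex mat) $$ (i,j)"
    using i j assms(1-3) \<open>cinner m w u = 0\<close> by auto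
  finally show "(mat_adjoint V * V) $$ (i,j) = (1\<^sub>m 2 :: complex mat) $$ (i,j)" .
qed (auto simp: V_def)

lemma extreme_point_pencil_perturbation:
  assumes A: "\<forall>i<length A. hermitian_mat d (A ! i)" and gh: "g \<le> length A"
    and E: "euclidean_extreme_point (scalar_tuple a g) (proj_graded g (spectrahedron d A) 1)"
    and "t > 0"
    and pm: "\<And>u. 0 \<le> Re (entry_form d (pencil_at A a) u u) - t * Re (entry_form d (lin_pencil_at A b) u u) \<and>
      0 \<le> Re (entry_form d (pencil_at A a) u u) + t * Re (entry_form d (lin_pencil_at A b) u u)"
  shows "\<forall>j<g. b j = 0"
proof -
  have in_proj: "scalar_tuple (\<lambda>j. a j + s * b j) g \<in> proj_graded g (spectrahedron d A) 1"
    if "s = t \<or> s = - t" for s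
  proof -
    have "0 \<le> Re (entry_form d (pencil_at A a) u u) - s * Re (entry_form d (lin_pencil_at A b) u u)" for u
      using pm[of u] that by auto
    then have "scalar_tuple (\<lambda>j. a j + s * b j) (length A) \<in> spectrahedron d A 1"
      unfolding scalar_tuple_in_spectrahedron_iff[OF A] pencil_at_shift entry_form_diff by simp
    then show ?thesis
      unfolding proj_graded_def using take_scalar_tuple[OF gh] by (metis image_eqI)
  qed
  have x: "scalar_tuple a g =
      scalar_tuple (\<lambda>j. 1 / 2 * (a j + t * b j) + (1 - 1 / 2) * (a j + - t * b j)) g"
    unfolding scalar_tuple_eq_iff by (simp add: algebra_simps)
  have "\<forall>j<g. a j + t * b j = a j + - t * b j"
    by (rule euclidean_extreme_point_scalar_tupleD[OF E in_proj in_proj _ _ x]) auto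
  then show ?thesis using \<open>t > 0\<close> by simp
qed

lemma two_columns_compress_index:
  fixes u w :: "nat \<Rightarrow> complex"
  assumes M: "M \<in> carrier_mat m m"
  defines "V \<equiv> mat m 2 (\<lambda>(k,c). if c = 0 then u k else w k)"
  shows "(mat_adjoint V * M * V) $$ (0,0) = mat_form m M u u"
    and "(mat_adjoint V * M * V) $$ (1,1) = mat_form m M w w"
    and "(mat_adjoint V * M * V) $$ (1,0) = mat_form m M w u"
proof -
  have V: "V \<in> carrier_mat m 2" unfolding V_def by simp
  have "mat_form m M (\<lambda>k. V $$ (k,p)) (\<lambda>k. V $$ (k,q)) =
      mat_form m M (if p = 0 then u else w) (if q = 0 then u else w)" if "p < 2" "q < 2" for p q
    using that unfolding V_def by (intro mat_form_cong) auto
  then show "(mat_adjoint V * M * V) $$ (0,0) = mat_form m M u u"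
    and "(mat_adjoint V * M * V) $$ (1,1) = mat_form m M w w"
    and "(mat_adjoint V * M * V) $$ (1,0) = mat_form m M w u"
    using compress_index[OF M V] by simp_all
qed

lemma extreme_point_compress_offdiag:
  assumes A: "\<forall>i<length A. hermitian_mat d (A ! i)" and gh: "g \<le> length A"
    and conj_closed: "\<forall>X\<in>spectrahedron d A 2. map (map_mat cnj) X \<in> spectrahedron d A 2"
    and E: "euclidean_extreme_point x (proj_graded g (spectrahedron d A) 1)"
    and W: "W \<in> spectrahedron d A m"
    and uw: "cinner m u u = 1" "cinner m w w = 1" "cinner m u w = 0"
    and x: "x = scalar_tuple (\<lambda>j. Re (mat_form m (W ! j) u u)) g"
  shows "\<forall>j<g. Re (mat_form m (W ! j) w u) = 0"
proof -
  define V where "V = mat m 2 (\<lambda>(k,c). if c = 0 then u k else w k)"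
  define X where "X = tuple_compress V W"
  have "V \<in> carrier_mat m 2" unfolding V_def by simp
  then have X2: "X \<in> spectrahedron d A 2"
    unfolding X_def using spectrahedron_compress[OF A W] isometry_two_columns[OF uw] V_def by blast
  have entries: "X ! j $$ (0,0) = mat_form m (W ! j) u u" "X ! j $$ (1,1) = mat_form m (W ! j) w w"
      "X ! j $$ (1,0) = mat_form m (W ! j) w u" if "j < length A" for j
    using two_columns_compress_index[OF spectrahedronD(3)[OF W that]] that spectrahedronD(1)[OF W]
    unfolding X_def tuple_compress_def V_def by simp_all
  define aw where "aw j = Re (X ! j $$ (0,0))" for j
  define cw where "cw j = Re (X ! j $$ (1,1))" for j
  define bt where "bt j = Re (X ! j $$ (1,0))" for j
  let ?L = "entry_form d (pencil_at A aw)" and ?B = "entry_form d (lin_pencil_at A bt)"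
    and ?C = "entry_form d (pencil_at A cw)"
  have "sesq_form d ?L" "sesq_form d ?C" "sesq_form d ?B"
    by (rule entry_form_sesq_form, erule (1) pencil_at_hermitian[OF A])+
      (rule entry_form_sesq_form, erule (1) lin_pencil_at_hermitian[OF A])
  moreover have "0 \<le> Re (?L al al) + Re (?C ga ga) - 2 * Re (?B al ga)" for al ga
    unfolding aw_def cw_def bt_def using conj_closed_block_form[OF A X2] conj_closed X2 by blast
  ultimately obtain t where "t > 0"
    and "\<And>u. 0 \<le> Re (?L u u) - t * Re (?B u u) \<and> 0 \<le> Re (?L u u) + t * Re (?B u u)"
    using block_form_perturbation by metis
  moreover have "x = scalar_tuple aw g"
    unfolding x scalar_tuple_eq_iff aw_def using entries gh by simp
  ultimately have "\<forall>j<g. bt j = 0"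
    using extreme_point_pencil_perturbation[OF A gh] E by blast
  then show ?thesis using entries gh unfolding bt_def by simp
qed

text \<open>If \<open>u\<close> were not a common eigenvector of \<open>W\<^sub>1, \<dots>, W\<^sub>g\<close>, the normalised residual
  \<open>w\<close> of some \<open>W\<^sub>j u\<close> would be orthogonal to \<open>u\<close> with \<open>\<langle>w, W\<^sub>j u\<rangle> > 0\<close>.\<close>

lemma extreme_point_common_eigenvector:
  assumes A: "\<forall>i<length A. hermitian_mat d (A ! i)" and gh: "g \<le> length A"
    and conj_closed: "\<forall>X\<in>spectrahedron d A 2. map (map_mat cnj) X \<in> spectrahedron d A 2"
    and E: "euclidean_extreme_point x (proj_graded g (spectrahedron d A) 1)"
    and W: "W \<in> spectrahedron d A m" and u: "cinner m u u = 1"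
    and x: "x = scalar_tuple (\<lambda>j. Re (mat_form m (W ! j) u u)) g"
  shows "\<forall>j<g. \<forall>k<m. (\<Sum>l<m. W ! j $$ (k,l) * u l) = of_real (Re (mat_form m (W ! j) u u)) * u k"
proof (rule ccontr)
  assume "\<not> ?thesis"
  then obtain j k0 where j: "j < g" and k0: "k0 < m"
    and ne: "(\<Sum>l<m. W ! j $$ (k0,l) * u l) \<noteq> of_real (Re (mat_form m (W ! j) u u)) * u k0" by blast
  have Wj: "hermitian_mat m (W ! j)" using spectrahedronD(2)[OF W] j gh by simp
  define a where "a = Re (mat_form m (W ! j) u u)"
  define r where "r k = (\<Sum>l<m. W ! j $$ (k,l) * u l) - of_real a * u k" for k
  define \<rho> where "\<rho> = (\<Sum>k<m. (cmod (r k))\<^sup>2)"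
  define w where "w k = of_real (1 / sqrt \<rho>) * r k" for k
  have "0 < (cmod (r k0))\<^sup>2" using ne unfolding r_def a_def by simp
  also have "\<dots> \<le> \<rho>" unfolding \<rho>_def using k0 by (intro member_le_sum) auto
  finally have "\<rho> > 0" .
  have Wu: "mat_form m (W ! j) v u = cinner m v r + of_real a * cinner m v u" for v
    unfolding mat_form_row cinner_def r_def by (simp add: algebra_simps sum_subtractf sum_distrib_left)
  have "cinner m u r = 0"
    using Wu[of u] mat_form_hermitian_real[OF Wj, of u] u unfolding a_def by simp
  then have uw: "cinner m u w = 0"
    unfolding w_def[abs_def] cinner_scale_right by simp
  have "Re (mat_form m (W ! j) w u) = 0"
    using extreme_point_compress_offdiag[OF A gh conj_closed E W u _ uw x] cinner_normalize \<open>\<rho> > 0\<close> j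
    unfolding w_def[abs_def] \<rho>_def by blast
  moreover have "mat_form m (W ! j) w u = of_real (\<rho> / sqrt \<rho>)"
    using Wu[of w] uw cinner_cnj[of m u w]
    unfolding w_def[abs_def] cinner_scale_left cinner_self \<rho>_def[symmetric] by simp
  ultimately show False using \<open>\<rho> > 0\<close> by simp
qed

section \<open>Householder reflections\<close>

definition reflection_mat :: "nat \<Rightarrow> (nat \<Rightarrow> complex) \<Rightarrow> complex mat" where
  "reflection_mat m v = mat m m (\<lambda>(p,q). (if p = q then 1 else 0) - 2 * v p * cnj (v q) / cinner m v v)"

lemma reflection_mat_carrier: "reflection_mat m v \<in> carrier_mat m m"
  unfolding reflection_mat_def by simp

lemma reflection_mat_dim [simp]: "dim_row (reflection_mat m v) = m" "dim_col (reflection_mat m v) = m"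
  unfolding reflection_mat_def by simp_all

lemma reflection_mat_index:
  "p < m \<Longrightarrow> q < m \<Longrightarrow>
   reflection_mat m v $$ (p,q) = (if p = q then 1 else 0) - 2 * v p * cnj (v q) / cinner m v v"
  unfolding reflection_mat_def by simp

lemma reflection_mat_adjoint: "mat_adjoint (reflection_mat m v) = reflection_mat m v"
proof -
  have "cnj (cinner m v v) = cinner m v v" using cinner_cnj[of m v v] by simp
  then show ?thesis
    by (intro eq_matI) (simp_all add: reflection_mat_index mult.commute)
qed

lemma reflection_mat_apply:
  assumes "p < m"
  shows "(\<Sum>k<m. reflection_mat m v $$ (p,k) * a k) = a p - 2 * v p * cinner m v a / cinner m v v"
proof -
  have "(\<Sum>k<m. reflection_mat m v $$ (p,k) * a k) =
      (\<Sum>k<m. (if p = k then a k else 0)) - 2 * v p / cinner m v v * (\<Sum>k<m. cnj (v k) * a k)"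
    unfolding sum_distrib_left sum_subtractf[symmetric]
    by (rule sum.cong) (auto simp: reflection_mat_index assms algebra_simps)
  then show ?thesis using assms unfolding cinner_def[of m v a] by simp
qed

lemma reflection_mat_involutive: "reflection_mat m v * reflection_mat m v = 1\<^sub>m m"
proof (rule eq_matI)
  let ?R = "reflection_mat m v" and ?s = "cinner m v v"
  fix p q assume "p < dim_row (1\<^sub>m m :: complex mat)" "q < dim_col (1\<^sub>m m :: complex mat)"
  then have p: "p < m" and q: "q < m" by auto
  have "(?R * ?R) $$ (p,q) = (\<Sum>k<m. ?R $$ (p,k) * ?R $$ (k,q))"
    using p q by (simp add: scalar_prod_def lessThan_atLeast0)
  also have "\<dots> = ?R $$ (p,q) - 2 * v p * cinner m v (\<lambda>k. ?R $$ (k,q)) / ?s"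
    by (rule reflection_mat_apply[OF p])
  also have "cinner m v (\<lambda>k. ?R $$ (k,q)) = cnj (v q) - 2 * cnj (v q)"
  proof -
    have "cinner m v (\<lambda>k. ?R $$ (k,q)) =
        (\<Sum>k<m. (if k = q then cnj (v k) else 0) - cnj (v k) * v k * (2 * cnj (v q) / ?s))"
      unfolding cinner_def[of m v "\<lambda>k. ?R $$ (k,q)"]
      by (intro sum.cong refl) (simp add: reflection_mat_index q algebra_simps)
    also have "\<dots> = cnj (v q) - ?s * (2 * cnj (v q) / ?s)"
      using q by (simp only: sum_subtractf sum_distrib_right[symmetric] cinner_def[of m v v, symmetric])
        simp
    also have "\<dots> = cnj (v q) - 2 * cnj (v q)"
    proof (cases "?s = 0")
      case True
      then have "\<forall>k\<in>{..<m}. (cmod (v k))\<^sup>2 = 0"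
        using cinner_self[of m v] by (subst sum_nonneg_eq_0_iff[symmetric]) (auto simp del: of_real_sum)
      then show ?thesis using q True by simp
    qed simp
    finally show ?thesis .
  qed
  finally show "(?R * ?R) $$ (p,q) = (1\<^sub>m m :: complex mat) $$ (p,q)"
    using p q by (simp add: reflection_mat_index algebra_simps)
qed simp_all

text \<open>The Householder reflection in \<open>v = u - \<mu> e\<^sub>0\<close>, with the phase \<open>\<mu>\<close> of \<open>u\<^sub>0\<close>
  chosen so that \<open>\<langle>v, v\<rangle> = 2 \<langle>v, u\<rangle>\<close>, maps the unit vector \<open>u\<close> to \<open>\<mu> e\<^sub>0\<close>.\<close>

lemma householder:
  assumes m: "0 < m" and u: "cinner m u u = 1"
  obtains H \<mu> where "H \<in> carrier_mat m m" "mat_adjoint H = H" "H * H = 1\<^sub>m m" "cmod \<mu> = 1"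
    "\<And>p. p < m \<Longrightarrow> (\<Sum>k<m. H $$ (p,k) * u k) = (if p = 0 then \<mu> else 0)"
proof -
  define \<mu> where "\<mu> = (if u 0 = 0 then 1 else u 0 / of_real (cmod (u 0)))"
  have \<mu>1: "cmod \<mu> = 1" unfolding \<mu>_def by (simp add: norm_divide)
  have \<mu>u: "cnj \<mu> * u 0 = of_real (cmod (u 0))"
    using cnj_mult_self[of "u 0"] unfolding \<mu>_def by (auto simp: power2_eq_square field_simps)
  have \<mu>\<mu>: "\<mu> * cnj \<mu> = 1" using \<mu>1 complex_norm_square[of \<mu>] by simp
  define v where "v k = u k - (if k = 0 then \<mu> else 0)" for k
  have m0: "0 \<in> {..<m}" using m by simp
  have vu: "cinner m v u = 1 - of_real (cmod (u 0))"
  proof -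
    have "cnj (v k) * u k = cnj (u k) * u k - (if k = 0 then cnj \<mu> * u k else 0)" for k
      by (cases "k = 0") (simp_all add: v_def algebra_simps)
    then have "cinner m v u = cinner m u u - (\<Sum>k<m. if k = 0 then cnj \<mu> * u k else 0)"
      unfolding cinner_def by (simp add: sum_subtractf)
    also have "(\<Sum>k<m. if k = 0 then cnj \<mu> * u k else 0) = cnj \<mu> * u 0" using m0 by (simp add: sum.delta)
    finally show ?thesis using u \<mu>u by simp
  qed
  have vv: "cinner m v v = 2 * cinner m v u"
  proof -
    have "cnj (v k) * v k = cnj (v k) * u k - (if k = 0 then \<mu> * cnj (v k) else 0)" for k
      by (cases "k = 0") (simp_all add: v_def algebra_simps)
    then have "cinner m v v = cinner m v u - (\<Sum>k<m. if k = 0 then \<mu> * cnj (v k) else 0)"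
      unfolding cinner_def by (simp add: sum_subtractf)
    also have "(\<Sum>k<m. if k = 0 then \<mu> * cnj (v k) else 0) = \<mu> * cnj (u 0) - \<mu> * cnj \<mu>"
      using m0 by (simp add: sum.delta v_def algebra_simps)
    also have "\<mu> * cnj (u 0) = cnj (cnj \<mu> * u 0)" by simp
    finally show ?thesis unfolding \<mu>u \<mu>\<mu> vu by simp
  qed
  have "(\<Sum>k<m. reflection_mat m v $$ (p,k) * u k) = (if p = 0 then \<mu> else 0)" if p: "p < m" for p
  proof (cases "cinner m v u = 0")
    case True
    then have "\<forall>k\<in>{..<m}. (cmod (v k))\<^sup>2 = 0"
      using cinner_self[of m v] vv by (subst sum_nonneg_eq_0_iff[symmetric]) (auto simp del: of_real_sum)
    then have "v p = 0" using p by simp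
    then show ?thesis unfolding reflection_mat_apply[OF p] v_def by (auto split: if_splits)
  next
    case False
    then show ?thesis unfolding reflection_mat_apply[OF p] vv v_def by (auto simp: field_simps)
  qed
  then show ?thesis
    using that reflection_mat_carrier reflection_mat_adjoint reflection_mat_involutive \<mu>1 by blast
qed

section \<open>A common eigenvector splits off a direct summand\<close>

context
  fixes m :: nat and H :: "complex mat" and u :: "nat \<Rightarrow> complex" and \<mu> :: complex
  assumes H: "H \<in> carrier_mat m m" and H_adj: "mat_adjoint H = H" and HH: "H * H = 1\<^sub>m m"
    and Hu: "\<And>p. p < m \<Longrightarrow> (\<Sum>k<m. H $$ (p,k) * u k) = (if p = 0 then \<mu> else 0)"
    and \<mu>: "\<mu> \<noteq> 0"
begin

lemma reflection_cnj: "k < m \<Longrightarrow> a < m \<Longrightarrow> cnj (H $$ (k,a)) = H $$ (a,k)"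
  using hermitian_mat_cnj[of m H a k] H H_adj unfolding hermitian_mat_def by simp

lemma reflection_square_index:
  "a < m \<Longrightarrow> b < m \<Longrightarrow> (\<Sum>q<m. H $$ (a,q) * H $$ (q,b)) = (if a = b then 1 else 0)"
  using arg_cong[OF HH, of "\<lambda>M. M $$ (a,b)"] H by (simp add: scalar_prod_def lessThan_atLeast0)

lemma reflection_first_column:
  assumes l: "l < m"
  shows "H $$ (l,0) = u l / \<mu>"
proof -
  have "u l = (\<Sum>k<m. if l = k then u k else 0)" using l by simp
  also have "\<dots> = (\<Sum>k<m. (\<Sum>q<m. H $$ (l,q) * H $$ (q,k)) * u k)"
    using l by (intro sum.cong refl) (simp add: reflection_square_index)
  also have "\<dots> = (\<Sum>k<m. \<Sum>q<m. H $$ (l,q) * (H $$ (q,k) * u k))"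
    by (simp add: sum_distrib_right mult.assoc)
  also have "\<dots> = (\<Sum>q<m. H $$ (l,q) * (\<Sum>k<m. H $$ (q,k) * u k))"
    by (subst sum.swap) (simp add: sum_distrib_left)
  also have "\<dots> = (\<Sum>q<m. if q = 0 then H $$ (l,q) * \<mu> else 0)"
    by (intro sum.cong refl) (simp add: Hu)
  also have "\<dots> = H $$ (l,0) * \<mu>" using l by simp
  finally show ?thesis using \<mu> by (simp add: field_simps)
qed

lemma reflection_tail_isometry:
  assumes "m = Suc p"
  shows "mat_adjoint (mat m p (\<lambda>(k,c). H $$ (k, c + 1))) * mat m p (\<lambda>(k,c). H $$ (k, c + 1)) = 1\<^sub>m p"
proof (rule eq_matI)
  fix a b assume "a < dim_row (1\<^sub>m p :: complex mat)" "b < dim_col (1\<^sub>m p :: complex mat)"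
  then have a: "a < p" and b: "b < p" by auto
  have "(mat_adjoint (mat m p (\<lambda>(k,c). H $$ (k, c + 1))) * mat m p (\<lambda>(k,c). H $$ (k, c + 1))) $$ (a,b) =
      (\<Sum>k<m. H $$ (a + 1,k) * H $$ (k,b + 1))"
    using a b assms reflection_cnj by (simp add: scalar_prod_def lessThan_atLeast0)
  also have "\<dots> = (1\<^sub>m p :: complex mat) $$ (a,b)"
    using reflection_square_index[of "a + 1" "b + 1"] a b assms by simp
  finally show "(mat_adjoint (mat m p (\<lambda>(k,c). H $$ (k, c + 1))) * mat m p (\<lambda>(k,c). H $$ (k, c + 1))) $$ (a,b) =
      (1\<^sub>m p :: complex mat) $$ (a,b)" .
qed auto

lemma compress_reflection_first_column:
  assumes M: "M \<in> carrier_mat m m"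
    and eig: "\<And>k. k < m \<Longrightarrow> (\<Sum>l<m. M $$ (k,l) * u l) = of_real c * u k"
    and b: "b < m"
  shows "(mat_adjoint H * M * H) $$ (b,0) = (if b = 0 then of_real c else 0)"
proof -
  have "(mat_adjoint H * M * H) $$ (b,0) = mat_form m M (\<lambda>k. H $$ (k,b)) (\<lambda>k. H $$ (k,0))"
    using compress_index[OF M H b] b by simp
  also have "\<dots> = mat_form m M (\<lambda>k. H $$ (k,b)) (\<lambda>k. u k / \<mu>)"
    by (rule mat_form_cong) (simp_all add: reflection_first_column)
  also have "\<dots> = (\<Sum>k<m. cnj (H $$ (k,b)) * (\<Sum>l<m. M $$ (k,l) * u l)) / \<mu>"
    unfolding mat_form_row by (simp add: sum_divide_distrib[symmetric])
  also have "(\<Sum>k<m. cnj (H $$ (k,b)) * (\<Sum>l<m. M $$ (k,l) * u l)) = (\<Sum>k<m. H $$ (b,k) * u k) * of_real c"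
    unfolding sum_distrib_right by (intro sum.cong refl) (simp add: eig reflection_cnj b)
  finally show ?thesis using Hu[OF b] \<mu> by simp
qed

lemma compress_reflection_block:
  assumes M: "hermitian_mat m M" and m: "m = Suc p"
    and eig: "\<And>k. k < m \<Longrightarrow> (\<Sum>l<m. M $$ (k,l) * u l) = of_real c * u k"
  defines "U \<equiv> mat m p (\<lambda>(k,c). H $$ (k, c + 1))"
  shows "mat_adjoint H * M * H =
    four_block_mat (mat 1 1 (\<lambda>_. of_real c)) (0\<^sub>m 1 p) (0\<^sub>m p 1) (mat_adjoint U * M * U)"
    (is "?D = ?B")
proof (rule eq_matI)
  have Mc: "M \<in> carrier_mat m m" by (rule hermitian_mat_carrier[OF M])
  have U: "U \<in> carrier_mat m p" unfolding U_def by simp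
  have Dh: "hermitian_mat m ?D" by (rule hermitian_mat_compress[OF M H])
  show "dim_row ?D = dim_row ?B" "dim_col ?D = dim_col ?B" using H Mc U m by auto
  fix a b assume "a < dim_row ?B" "b < dim_col ?B"
  then have a: "a < m" and b: "b < m" using U m by auto
  have col0: "?D $$ (a,0) = (if a = 0 then of_real c else 0)" if "a < m" for a
    by (rule compress_reflection_first_column[OF Mc eig that])
  have row0: "?D $$ (0,b) = (if b = 0 then of_real c else 0)"
    using hermitian_mat_cnj[OF Dh _ b, of 0] col0[OF b] m by (cases "b = 0") auto
  have tail: "(mat_adjoint U * M * U) $$ (a - 1, b - 1) = ?D $$ (a,b)" if "a \<noteq> 0" "b \<noteq> 0"
    using that a b m compress_index[OF Mc U, of "a - 1" "b - 1"] compress_index[OF Mc H a b]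
    by (auto simp: U_def intro!: mat_form_cong)
  show "?D $$ (a,b) = ?B $$ (a,b)"
    using a b U Mc m col0[OF a] row0 tail by (auto simp: index_mat_four_block)
qed

lemma compress_reflection_involutive:
  assumes M: "M \<in> carrier_mat m m"
  shows "mat_adjoint H * (mat_adjoint H * M * H) * H = M"
proof -
  have "H * (H * M * H) * H = (H * H) * M * (H * H)"
    using H M by (simp add: assoc_mult_mat[of _ m m _ m _ m])
  then show ?thesis using M unfolding H_adj HH by simp
qed

end

lemma unitary_mat_one: "unitary_mat n (1\<^sub>m n)"
  unfolding unitary_mat_def mat_adjoint_one by simp

lemma common_eigenvector_level1:
  assumes W: "W \<in> spectrahedron d A 1" and gh: "g \<le> length A" and u: "cinner 1 u u = 1"
    and x: "x = scalar_tuple (\<lambda>j. Re (mat_form 1 (W ! j) u u)) g"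
    and eig: "\<forall>j<g. W ! j $$ (0,0) * u 0 = of_real (Re (mat_form 1 (W ! j) u u)) * u 0"
  shows "unitarily_equiv 1 (take g W) x"
proof -
  have "u 0 \<noteq> 0" using u unfolding cinner_def by auto
  moreover have "\<forall>j<length A. dim_row (W ! j) = 1 \<and> dim_col (W ! j) = 1"
    using spectrahedronD(3)[OF W] by auto
  ultimately have "take g W = x"
    using eig spectrahedronD(1)[OF W] gh unfolding x
    by (intro nth_equalityI) (auto intro!: eq_matI)
  moreover have "tuple_compress (1\<^sub>m 1) x = x"
    unfolding tuple_compress_def mat_adjoint_one x scalar_tuple_def by (simp add: map_idI)
  ultimately show ?thesis unfolding unitarily_equiv_def using unitary_mat_one by metis
qed

lemma common_eigenvector_splits:
  assumes A: "\<forall>i<length A. hermitian_mat d (A ! i)" and gh: "g \<le> length A"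
    and W: "W \<in> spectrahedron d A m" and m: "1 \<le> m" and u: "cinner m u u = 1"
    and x: "x = scalar_tuple (\<lambda>j. Re (mat_form m (W ! j) u u)) g"
    and eig: "\<forall>j<g. \<forall>k<m. (\<Sum>l<m. W ! j $$ (k,l) * u l) = of_real (Re (mat_form m (W ! j) u u)) * u k"
  shows "unitarily_equiv m (take g W) x \<or>
    (\<exists>p Z. Z \<in> proj_graded g (\<lambda>n. if 1 \<le> n then spectrahedron d A n else {}) p \<and> m = 1 + p \<and>
       unitarily_equiv m (take g W) (tuple_dsum 1 p x Z))"
proof (cases "m = 1")
  case True
  then show ?thesis using common_eigenvector_level1[of W d A g u x] W gh u x eig by auto
next
  case False
  define p where "p = m - 1"
  have mp: "m = Suc p" and "1 \<le> p" unfolding p_def using m False by auto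
  obtain H \<mu> where H: "H \<in> carrier_mat m m" "mat_adjoint H = H" "H * H = 1\<^sub>m m" "cmod \<mu> = 1"
    and Hu: "\<And>q. q < m \<Longrightarrow> (\<Sum>k<m. H $$ (q,k) * u k) = (if q = 0 then \<mu> else 0)"
    using householder[of m u] m u by auto
  have \<mu>: "\<mu> \<noteq> 0" using H(4) by auto
  define U where "U = mat m p (\<lambda>(k,c). H $$ (k, c + 1))"
  define Z where "Z = take g (tuple_compress U W)"
  have "U \<in> carrier_mat m p" unfolding U_def by simp
  then have "Z \<in> proj_graded g (\<lambda>n. if 1 \<le> n then spectrahedron d A n else {}) p"
    using spectrahedron_compress[OF A W] reflection_tail_isometry[OF H(1-3) Hu \<mu> mp] \<open>1 \<le> p\<close>
    unfolding proj_graded_def Z_def U_def by auto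
  moreover have "take g W = tuple_compress H (tuple_dsum 1 p x Z)"
  proof (rule nth_equalityI)
    show "length (take g W) = length (tuple_compress H (tuple_dsum 1 p x Z))"
      using spectrahedronD(1)[OF W] gh unfolding tuple_compress_def tuple_dsum_def Z_def x by simp
    fix j assume "j < length (take g W)"
    then have j: "j < g" and jA: "j < length A" using spectrahedronD(1)[OF W] gh by auto
    have "W ! j = mat_adjoint H * (mat_adjoint H * W ! j * H) * H"
      using compress_reflection_involutive[OF H(1-3) Hu \<mu> spectrahedronD(3)[OF W jA]] by simp
    also have "mat_adjoint H * W ! j * H = four_block_mat (x ! j) (0\<^sub>m 1 p) (0\<^sub>m p 1) (Z ! j)"
      using compress_reflection_block[OF H(1-3) Hu \<mu> spectrahedronD(2)[OF W jA] mp] eig j jA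
        spectrahedronD(1)[OF W] gh
      unfolding x Z_def U_def tuple_compress_def by simp
    finally show "take g W ! j = tuple_compress H (tuple_dsum 1 p x Z) ! j"
      using j spectrahedronD(1)[OF W] gh unfolding tuple_compress_def tuple_dsum_def Z_def x by simp
  qed
  moreover have "unitary_mat m H" unfolding unitary_mat_def using H by simp
  ultimately show ?thesis unfolding unitarily_equiv_def using mp by auto
qed

section \<open>Free extreme points\<close>

lemma scalar_tuple_in_proj:
  "g \<le> length A \<Longrightarrow> scalar_tuple f (length A) \<in> spectrahedron d A 1 \<Longrightarrow>
   scalar_tuple f g \<in> proj_graded g (spectrahedron d A) 1"
  unfolding proj_graded_def by (metis image_eqI take_scalar_tuple)

lemma euclidean_extreme_point_convex_sum:
  fixes k :: nat
  assumes A: "\<forall>i<length A. hermitian_mat d (A ! i)" and gh: "g \<le> length A"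
    and E: "euclidean_extreme_point (scalar_tuple f g) (proj_graded g (spectrahedron d A) 1)"
    and t: "\<forall>i<k. 0 < t i" "(\<Sum>i<k. t i) = 1"
    and P: "\<forall>i<k. scalar_tuple (p i) (length A) \<in> spectrahedron d A 1"
    and f: "\<forall>j<g. f j = (\<Sum>i<k. t i * p i j)"
    and i0: "i0 < k"
  shows "\<forall>j<g. p i0 j = f j"
proof -
  define I where "I = {..<k} - {i0}"
  have split: "(\<Sum>i<k. h i) = h i0 + (\<Sum>i\<in>I. h i)" for h :: "nat \<Rightarrow> real"
    unfolding I_def using i0 by (simp add: sum.remove)
  have tI: "(\<Sum>i\<in>I. t i) = 1 - t i0" using split[of t] t(2) by simp
  show ?thesis
  proof (cases "I = {}")
    case True
    then show ?thesis using tI f split by simp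
  next
    case False
    then obtain i1 where "i1 \<in> I" by blast
    then have "t i1 \<le> (\<Sum>i\<in>I. t i)"
      using t(1) unfolding I_def by (intro member_le_sum) (auto intro: less_imp_le)
    then have t1: "t i0 < 1" using tI t(1) \<open>i1 \<in> I\<close> unfolding I_def by force
    define q where "q j = (\<Sum>i\<in>I. t i / (1 - t i0) * p i j)" for j
    have q: "scalar_tuple q (length A) \<in> spectrahedron d A 1"
      unfolding q_def[abs_def]
      by (rule spectrahedron_level1_convex[OF A])
        (use t t1 tI P in \<open>auto simp: I_def sum_divide_distrib[symmetric] intro: less_imp_le\<close>)
    have f_comb: "\<forall>j<g. f j = t i0 * p i0 j + (1 - t i0) * q j"
      unfolding q_def using f split t1 by (simp add: sum_distrib_left)
    then have "scalar_tuple f g = scalar_tuple (\<lambda>j. t i0 * p i0 j + (1 - t i0) * q j) g"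
      unfolding scalar_tuple_eq_iff by blast
    then have "\<forall>j<g. p i0 j = q j"
      by (intro euclidean_extreme_point_scalar_tupleD[OF E scalar_tuple_in_proj[OF gh]
          scalar_tuple_in_proj[OF gh q]]) (use P t(1) t1 i0 in auto)
    then show ?thesis using f_comb by (simp add: algebra_simps)
  qed
qed

lemma column_compress_normalized:
  assumes V: "V \<in> carrier_mat m 1" and "V \<noteq> 0\<^sub>m m 1"
  defines "t \<equiv> \<Sum>l<m. (cmod (V $$ (l,0)))\<^sup>2"
    and "u \<equiv> \<lambda>l. complex_of_real (1 / sqrt (\<Sum>l<m. (cmod (V $$ (l,0)))\<^sup>2)) * V $$ (l,0)"
  shows "t > 0" and "cinner m u u = 1" and "(mat_adjoint V * V) $$ (0,0) = of_real t"
    and "M \<in> carrier_mat m m \<Longrightarrow> (mat_adjoint V * M * V) $$ (0,0) = of_real t * mat_form m M u u"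
proof -
  have "\<exists>l<m. V $$ (l,0) \<noteq> 0"
    using assms by (auto intro!: eq_matI)
  then obtain l where "l < m" "V $$ (l,0) \<noteq> 0" by blast
  then have "0 < (cmod (V $$ (l,0)))\<^sup>2" by simp
  also have "\<dots> \<le> t" unfolding t_def using \<open>l < m\<close> by (intro member_le_sum) auto
  finally show "t > 0" .
  then show "cinner m u u = 1"
    unfolding u_def t_def by (rule cinner_normalize)
  show "(mat_adjoint V * V) $$ (0,0) = of_real t"
    using V cinner_self[of m "\<lambda>l. V $$ (l,0)"] unfolding t_def cinner_def
    by (simp add: scalar_prod_def lessThan_atLeast0)
  assume M: "M \<in> carrier_mat m m"
  have "cnj (of_real (1 / sqrt t)) * of_real (1 / sqrt t) * of_real t = (1 :: complex)"
    using \<open>t > 0\<close> by (simp flip: of_real_mult)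
  then show "(mat_adjoint V * M * V) $$ (0,0) = of_real t * mat_form m M u u"
    using compress_index[OF M V, of 0 0] unfolding u_def t_def[symmetric] mat_form_scale
    by (simp add: mult_ac)
qed

lemma proj_level1_scalar_tuple:
  assumes "g \<le> length A" "x \<in> proj_graded g (spectrahedron d A) 1"
  obtains f where "x = scalar_tuple f g"
proof -
  obtain X where X: "X \<in> spectrahedron d A 1" and x: "x = take g X"
    using assms(2) unfolding proj_graded_def by auto
  define f where "f j = Re (X ! j $$ (0,0))" for j
  have "X = scalar_tuple f (length A)"
    using X SM_tuples_1_scalar_tuple unfolding spectrahedron_def f_def by auto
  then show ?thesis using that x take_scalar_tuple[OF assms(1)] by simp
qed

text \<open>At the first level, a decomposition \<open>x = \<Sum>\<^sub>i V\<^sub>i\<^sup>* W\<^sub>i V\<^sub>i\<close> is a convex combination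
  of the compressions of the \<open>W\<^sub>i\<close> to the unit vectors \<open>V\<^sub>i / \<parallel>V\<^sub>i\<parallel>\<close>, with weights \<open>\<parallel>V\<^sub>i\<parallel>\<^sup>2\<close>.\<close>

lemma level1_decomposition_convex:
  assumes gh: "g \<le> length A"
    and V: "\<forall>i<k. V i \<in> carrier_mat (mm i) 1 \<and> V i \<noteq> 0\<^sub>m (mm i) 1"
    and W: "\<forall>i<k. W i \<in> spectrahedron d A (mm i)"
    and unit: "mat_sum 1 1 k (\<lambda>i. mat_adjoint (V i) * V i) = 1\<^sub>m 1"
    and x: "\<forall>j<g. scalar_tuple f g ! j = mat_sum 1 1 k (\<lambda>i. mat_adjoint (V i) * (W i ! j) * V i)"
  obtains t u where "\<forall>i<k. 0 < t i \<and> cinner (mm i) (u i) (u i) = 1" and "(\<Sum>i<k. t i) = 1"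
    and "\<forall>j<g. f j = (\<Sum>i<k. t i * Re (mat_form (mm i) (W i ! j) (u i) (u i)))"
proof -
  define t where "t i = (\<Sum>l<mm i. (cmod (V i $$ (l,0)))\<^sup>2)" for i
  define u where "u i = (\<lambda>l. complex_of_real (1 / sqrt (t i)) * V i $$ (l,0))" for i
  note col = column_compress_normalized[of "V i" "mm i" for i, folded t_def, folded u_def]
  have tu: "\<forall>i<k. 0 < t i \<and> cinner (mm i) (u i) (u i) = 1" using col(1,2) V by blast
  have "(\<Sum>i<k. complex_of_real (t i)) = (\<Sum>i<k. (mat_adjoint (V i) * V i) $$ (0,0))"
    using col(3) V by (intro sum.cong refl) (metis lessThan_iff)
  also have "\<dots> = 1"
    using arg_cong[OF unit, of "\<lambda>M. M $$ (0,0)"] mat_sum_index[of 0 1 0 1 k "\<lambda>i. mat_adjoint (V i) * V i"]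
    by simp
  finally have tsum: "(\<Sum>i<k. t i) = 1" by (metis of_real_eq_1_iff of_real_sum)
  have summand: "(mat_adjoint (V i) * (W i ! j) * V i) $$ (0,0) =
      of_real (t i * Re (mat_form (mm i) (W i ! j) (u i) (u i)))"
    if i: "i < k" and j: "j < g" for i j
  proof -
    have jA: "j < length A" using j gh by simp
    have "(mat_adjoint (V i) * (W i ! j) * V i) $$ (0,0) = of_real (t i) * mat_form (mm i) (W i ! j) (u i) (u i)"
      by (rule col(4)) (use V W spectrahedronD(3) i jA in auto)
    also have "mat_form (mm i) (W i ! j) (u i) (u i) = of_real (Re (mat_form (mm i) (W i ! j) (u i) (u i)))"
      by (rule mat_form_hermitian_real) (use spectrahedronD(2) W i jA in auto)
    finally show ?thesis by simp
  qed
  have "\<forall>j<g. f j = (\<Sum>i<k. t i * Re (mat_form (mm i) (W i ! j) (u i) (u i)))"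
  proof (intro allI impI)
    fix j assume j: "j < g"
    have "complex_of_real (f j) = mat_sum 1 1 k (\<lambda>i. mat_adjoint (V i) * (W i ! j) * V i) $$ (0,0)"
      using arg_cong[OF x[rule_format, OF j], of "\<lambda>M. M $$ (0,0)"] j by simp
    also have "\<dots> = (\<Sum>i<k. (mat_adjoint (V i) * (W i ! j) * V i) $$ (0,0))"
      by (rule mat_sum_index) simp_all
    also have "\<dots> = (\<Sum>i<k. complex_of_real (t i * Re (mat_form (mm i) (W i ! j) (u i) (u i))))"
      using summand j by simp
    finally show "f j = (\<Sum>i<k. t i * Re (mat_form (mm i) (W i ! j) (u i) (u i)))"
      by (simp only: of_real_sum[symmetric] of_real_eq_iff)
  qed
  with tu tsum show ?thesis by (rule that)
qed

lemma extreme_point_decomposition_summand: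
  assumes A: "\<forall>i<length A. hermitian_mat d (A ! i)" and gh: "g \<le> length A"
    and E: "euclidean_extreme_point x (proj_graded g (spectrahedron d A) 1)"
    and decomp: "\<forall>i<k. V i \<in> carrier_mat (m i) 1 \<and> V i \<noteq> 0\<^sub>m (m i) 1 \<and>
        Y i \<in> proj_graded g (\<lambda>n. if 1 \<le> n then spectrahedron d A n else {}) (m i)"
    and unit: "mat_sum 1 1 k (\<lambda>i. mat_adjoint (V i) * V i) = 1\<^sub>m 1"
    and x: "\<forall>j<length x. x ! j = mat_sum 1 1 k (\<lambda>i. mat_adjoint (V i) * (Y i ! j) * V i)"
    and "i0 < k"
  obtains W u where "1 \<le> m i0" "W \<in> spectrahedron d A (m i0)" "Y i0 = take g W"
    "cinner (m i0) u u = 1" "x = scalar_tuple (\<lambda>j. Re (mat_form (m i0) (W ! j) u u)) g"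
proof -
  have "\<forall>i\<in>{..<k}. \<exists>Wi. 1 \<le> m i \<and> Wi \<in> spectrahedron d A (m i) \<and> Y i = take g Wi"
    using decomp unfolding proj_graded_def by (auto split: if_splits)
  then obtain W where m: "\<And>i. i < k \<Longrightarrow> 1 \<le> m i"
    and W: "\<forall>i<k. W i \<in> spectrahedron d A (m i)" and Y: "\<And>i. i < k \<Longrightarrow> Y i = take g (W i)"
    by (metis lessThan_iff bchoice)
  obtain f where xf: "x = scalar_tuple f g"
    using proj_level1_scalar_tuple[OF gh] E unfolding euclidean_extreme_point_def by blast
  have x': "\<forall>j<g. scalar_tuple f g ! j = mat_sum 1 1 k (\<lambda>i. mat_adjoint (V i) * (W i ! j) * V i)"
  proof (intro allI impI)
    fix j assume j: "j < g"
    have "x ! j = mat_sum 1 1 k (\<lambda>i. mat_adjoint (V i) * (Y i ! j) * V i)"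
      using x j unfolding xf by simp
    also have "\<dots> = mat_sum 1 1 k (\<lambda>i. mat_adjoint (V i) * (W i ! j) * V i)"
      by (rule mat_sum_cong) (simp add: Y j)
    finally show "scalar_tuple f g ! j = mat_sum 1 1 k (\<lambda>i. mat_adjoint (V i) * (W i ! j) * V i)"
      unfolding xf .
  qed
  have V: "\<forall>i<k. V i \<in> carrier_mat (m i) 1 \<and> V i \<noteq> 0\<^sub>m (m i) 1" using decomp by blast
  obtain t u where dec: "\<forall>i<k. 0 < t i \<and> cinner (m i) (u i) (u i) = 1" "(\<Sum>i<k. t i) = 1"
      "\<forall>j<g. f j = (\<Sum>i<k. t i * Re (mat_form (m i) (W i ! j) (u i) (u i)))"
    by (rule level1_decomposition_convex[OF gh V W unit x'])
  let ?p = "\<lambda>i j. Re (mat_form (m i) (W i ! j) (u i) (u i))"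
  have P: "\<forall>i<k. scalar_tuple (?p i) (length A) \<in> spectrahedron d A 1"
    using spectrahedron_unit_compress[OF A] W dec(1) by blast
  have t: "\<forall>i<k. 0 < t i" using dec(1) by blast
  have "\<forall>j<g. ?p i0 j = f j"
    by (rule euclidean_extreme_point_convex_sum[OF A gh E[unfolded xf] t dec(2) P dec(3) \<open>i0 < k\<close>])
  then have "x = scalar_tuple (?p i0) g" unfolding xf scalar_tuple_eq_iff by simp
  moreover have "cinner (m i0) (u i0) (u i0) = 1" using dec(1) \<open>i0 < k\<close> by blast
  ultimately show ?thesis
    using that[OF m[OF \<open>i0 < k\<close>] W[rule_format, OF \<open>i0 < k\<close>] Y[OF \<open>i0 < k\<close>]] by blast
qed

theorem mainTheorem11:
  fixes g h d :: nat and A :: "complex mat list" and x :: "complex mat list"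
  assumes "g \<le> h"
    and "length A = h"
    and "\<forall>i<h. hermitian_mat d (A ! i)"
    and "bounded_graded (\<lambda>n. if 1 \<le> n then spectrahedron d A n else {})"
    and "\<forall>X \<in> spectrahedron d A 2. map (map_mat cnj) X \<in> spectrahedron d A 2"
    and "euclidean_extreme_point x (proj_graded g (spectrahedron d A) 1)"
  shows "free_extreme_point (proj_graded g (\<lambda>n. if 1 \<le> n then spectrahedron d A n else {})) 1 x"
proof -
  have A: "\<forall>i<length A. hermitian_mat d (A ! i)" and gh: "g \<le> length A" using assms(1-3) by auto
  note conj_closed = assms(5) and E = assms(6)
  let ?K = "\<lambda>n. if 1 \<le> n then spectrahedron d A n else {}"
  show ?thesis unfolding free_extreme_point_def
  proof (intro conjI allI impI)
    show "x \<in> proj_graded g ?K 1"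
      using E unfolding euclidean_extreme_point_def proj_graded_def by simp
    fix k :: nat and m :: "nat \<Rightarrow> nat" and V :: "nat \<Rightarrow> complex mat"
      and Y :: "nat \<Rightarrow> complex mat list" and i :: nat
    assume decomp: "(\<forall>i<k. V i \<in> carrier_mat (m i) 1 \<and> V i \<noteq> 0\<^sub>m (m i) 1 \<and> Y i \<in> proj_graded g ?K (m i)) \<and>
      mat_sum 1 1 k (\<lambda>i. mat_adjoint (V i) * V i) = 1\<^sub>m 1 \<and>
      (\<forall>j<length x. x ! j = mat_sum 1 1 k (\<lambda>i. mat_adjoint (V i) * (Y i ! j) * V i))"
    assume i: "i < k"
    with decomp obtain W u where "1 \<le> m i" "W \<in> spectrahedron d A (m i)" "Y i = take g W"
      and u: "cinner (m i) u u = 1" and xu: "x = scalar_tuple (\<lambda>j. Re (mat_form (m i) (W ! j) u u)) g"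
      using extreme_point_decomposition_summand[OF A gh E] by blast
    then show "unitarily_equiv (m i) (Y i) x \<or>
        (\<exists>p Z. Z \<in> proj_graded g ?K p \<and> m i = 1 + p \<and> unitarily_equiv (m i) (Y i) (tuple_dsum 1 p x Z))"
      using common_eigenvector_splits[OF A gh] extreme_point_common_eigenvector[OF A gh conj_closed E]
      by simp
  qed
qed

end
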